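(* Let $\lambda>0$ and let $K_\lambda$, $M(\lambda)$, $\omega_\lambda$ be as in the context. Let $\gamma>0$, $\Delta>0$, $\sigma>0$. Let $\Lambda=\{\Omega_1,\dots,\Omega_N\}$ be a finite $\Delta$-partition of $\Omega$. Let $\Lambda_*=\{0=z_0<z_1<\dots<z_a=\gamma\}$ be a uniform partition of $[0,\gamma]$ with step $\delta=\gamma/a$. Let $E_\sigma=\{e_1,\dots,e_c\}$ be a finite $\sigma$-net on the unit sphere $E=\{x\in\mathbb{R}^n:\|x\|=1\}$. Define $$B_p^{\gamma,\Delta,\delta,\sigma}(r)=\Big\{x:\Omega\to\mathbb{R}^n:\ x(\xi)=z_{j_i}e_{l_i}\text{ for all }\xi\in\Omega_i,\ \text{where } z_{j_i}\in\Lambda_*,\ e_{l_i}\in E_\sigma\ (i=1,\dots,N),\ \sum_{i=1}^N\mu(\Omega_i)z_{j_i}^p\le r^p\Big\}$$ and $\mathcal{F}_p^{\gamma,\Delta,\delta,\sigma}(r)=\{F(x):x\in B_p^{\gamma,\Delta,\delta,\sigma}(r)\}$, which is a finite set. Then $$h_q\big(\mathcal{F}_p(r),\mathcal{F}_p^{\gamma,\Delta,\delta,\sigma}(r)\big)\le \lambda+\frac{c_*M(\lambda)}{\gamma^{p-1}}+\psi_\lambda(\Delta)+\varphi_\lambda(\delta)+\alpha_\lambda(\gamma,\sigma),$$ where $c_*=2r^p[\mu(\Omega)]^{1/q}$, $\psi_\lambda(\Delta)=2r[\mu(\Omega)]^{2/q}\omega_\lambda(\Delta)$, $\varphi_\lambda(\delta)=M(\lambda)[\mu(\Omega)]^{1+1/q}\delta$,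 and $\alpha_\lambda(\gamma,\sigma)=M(\lambda)[\mu(\Omega)]^{1+1/q}\gamma\sigma$.
   Context: Let $k,m,n\ge 1$ be integers and let $\Omega\subset\mathbb{R}^k$ be a compact set. Let $\mu$ denote Lebesgue measure. Let $p>1$, let $q$ satisfy $1/p+1/q=1$, and let $r>0$. Throughout, $\|\cdot\|$ denotes the Euclidean norm on vectors and the Euclidean (Frobenius) norm on $m\times n$ matrices. $L_p(\Omega;\mathbb{R}^n)$ is the space of Lebesgue measurable $x:\Omega\to\mathbb{R}^n$ with $\|x\|_p=(\int_\Omega\|x(s)\|^p\,ds)^{1/p}<\infty$. Set $B_p(r)=\{x\in L_p(\Omega;\mathbb{R}^n):\|x\|_p\le r\}$. For $U,V\subset L_q(\Omega;\mathbb{R}^m)$, $h_q(U,V)$ denotes the Hausdorff distance $\max\{\sup_{u\in U}\inf_{v\in V}\|u-v\|_q,\ \sup_{v\in V}\inf_{u\in U}\|u-v\|_q\}$. $K:\Omega\times\Omega\to\mathbb{R}^{m\times n}$ is Lebesgue measurable with $\int_\Omega\int_\Omega\|K(\xi,s)\|^q\,d\xi\,ds<\infty$. The Hilbert–Schmidt operator is $F(x)(\xi)=\int_\Omega K(\xi,s)x(s)\,ds$ for a.e. $\xi\in\Omega$, and $\mathcal{F}_p(r)=\{F(x):x\in B_p(r)\}\subset L_q(\Omega;\mathbb{R}^m)$. For $\lambda>0$, $K_\lambda:\Omega\times\Omega\to\mathbb{R}^{m\times n}$ is a continuous function with $\big(\int_\Omega\int_\Omega\|K(\xi,s)-K_\lambda(\xi,s)\|^q\,d\xi\,ds\big)^{1/q}\le\lambda/(2r)$.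 Set $M(\lambda)=\max\{\|K_\lambda(\xi,s)\|:(\xi,s)\in\Omega\times\Omega\}$. For $\Delta>0$, set $\omega_\lambda(\Delta)=\max\{\|K_\lambda(\xi,s_2)-K_\lambda(\xi,s_1)\|:\xi,s_1,s_2\in\Omega,\ \|s_2-s_1\|\le\Delta\}$. A finite $\Delta$-partition of $\Omega$ is a finite family $\{\Omega_1,\dots,\Omega_N\}$ of pairwise disjoint Lebesgue measurable subsets of $\Omega$ whose union is $\Omega$, with $\operatorname{diam}(\Omega_i)=\sup\{\|x-y\|:x,y\in\Omega_i\}\le\Delta$ for each $i$. A finite $\sigma$-net on $E$ is a finite set $E_\sigma\subset E$ such that every point of $E$ is within distance $\sigma$ of some point of $E_\sigma$. *)

theory Defs
  imports "HOL-Analysis.Analysis"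
begin

definition Lp_norm :: "real \<Rightarrow> 'a::euclidean_space set \<Rightarrow> ('a \<Rightarrow> 'b::real_normed_vector) \<Rightarrow> real" where
  "Lp_norm p Om x = (\<integral>s. norm (x s) powr p \<partial>(lebesgue_on Om)) powr (1 / p)"

definition Lp_space :: "real \<Rightarrow> 'a::euclidean_space set \<Rightarrow> ('a \<Rightarrow> 'b::euclidean_space) set" where
  "Lp_space p Om = {x. x \<in> borel_measurable (lebesgue_on Om) \<and>
                       integrable (lebesgue_on Om) (\<lambda>s. norm (x s) powr p)}"

definition Lp_ball :: "real \<Rightarrow> 'a::euclidean_space set \<Rightarrow> real \<Rightarrow> ('a \<Rightarrow> 'b::euclidean_space) set" where
  "Lp_ball p Om r = {x \<in> Lp_space p Om. Lp_norm p Om x \<le> r}"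

definition HS_op :: "'k::euclidean_space set \<Rightarrow> ('k \<Rightarrow> 'k \<Rightarrow> real^'n^'m) \<Rightarrow> ('k \<Rightarrow> real^'n) \<Rightarrow> ('k \<Rightarrow> real^'m)" where
  "HS_op Om K x = (\<lambda>xi. \<integral>s. K xi s *v x s \<partial>(lebesgue_on Om))"

definition haus_dist :: "real \<Rightarrow> 'a::euclidean_space set \<Rightarrow> ('a \<Rightarrow> 'b::real_normed_vector) set \<Rightarrow> ('a \<Rightarrow> 'b) set \<Rightarrow> ereal" where
  "haus_dist q Om U V =
     max (SUP u\<in>U. INF v\<in>V. ereal (Lp_norm q Om (\<lambda>xi. u xi - v xi)))
         (SUP v\<in>V. INF u\<in>U. ereal (Lp_norm q Om (\<lambda>xi. u xi - v xi)))"

definition kernel_max :: "'k::euclidean_space set \<Rightarrow> ('k \<Rightarrow> 'k \<Rightarrow> real^'n^'m) \<Rightarrow> real" where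
  "kernel_max Om Kl = Sup ((\<lambda>(xi, s). norm (Kl xi s)) ` (Om \<times> Om))"

definition kernel_modulus :: "'k::euclidean_space set \<Rightarrow> ('k \<Rightarrow> 'k \<Rightarrow> real^'n^'m) \<Rightarrow> real \<Rightarrow> real" where
  "kernel_modulus Om Kl D = Sup {norm (Kl xi s2 - Kl xi s1) | xi s1 s2.
      xi \<in> Om \<and> s1 \<in> Om \<and> s2 \<in> Om \<and> norm (s2 - s1) \<le> D}"

definition Delta_partition :: "'k::euclidean_space set \<Rightarrow> real \<Rightarrow> nat \<Rightarrow> (nat \<Rightarrow> 'k set) \<Rightarrow> bool" where
  "Delta_partition Om D N P \<longleftrightarrow>
     (\<forall>i<N. P i \<in> sets lebesgue \<and> P i \<subseteq> Om \<and> diameter (P i) \<le> D) \<and>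
     (\<forall>i<N. \<forall>j<N. i \<noteq> j \<longrightarrow> P i \<inter> P j = {}) \<and>
     (\<Union>i<N. P i) = Om"

definition sigma_net :: "'a::metric_space set \<Rightarrow> real \<Rightarrow> 'a set \<Rightarrow> bool" where
  "sigma_net E sg Es \<longleftrightarrow> finite Es \<and> Es \<subseteq> E \<and> (\<forall>x\<in>E. \<exists>e\<in>Es. dist x e \<le> sg)"

text \<open>The discretized ball B_p^{gamma,Delta,delta,sg}(r); the uniform grid is
  z_j = j * gamma / a, j = 0..a, with step delta = gamma / a.\<close>
definition disc_ball :: "real \<Rightarrow> 'k::euclidean_space set \<Rightarrow> real \<Rightarrow> nat \<Rightarrow> (nat \<Rightarrow> 'k set)
    \<Rightarrow> real \<Rightarrow> nat \<Rightarrow> (real^'n) set \<Rightarrow> ('k \<Rightarrow> real^'n) set" where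
  "disc_ball p Om r N P gamma a Es =
     {x. (\<forall>xi. xi \<notin> Om \<longrightarrow> x xi = 0) \<and>
         (\<exists>j l. (\<forall>i<N. j i \<le> a \<and> l i \<in> Es \<and>
                   (\<forall>xi\<in>P i. x xi = (real (j i) * gamma / real a) *\<^sub>R l i)) \<and>
                (\<Sum>i<N. measure lebesgue (P i) * (real (j i) * gamma / real a) powr p) \<le> r powr p)}"

end

theory Submission
  imports Defs
begin

text \<open>
  Given \<open>x\<close> in \<open>B\<^sub>p(r)\<close>, truncate it at height \<open>\<gamma>\<close>: the discarded part satisfies
  \<open>\<parallel>x - x\<^sub>\<gamma>\<parallel> \<le> \<parallel>x\<parallel>\<^sup>p / \<gamma>\<^sup>p\<^sup>-\<^sup>1\<close>. On each cell \<open>\<Omega>\<^sub>i\<close> replace \<open>x\<^sub>\<gamma>\<close> by its mean \<open>v\<^sub>i\<close>: freezing the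
  continuous kernel \<open>K\<^sub>\<lambda>\<close> at one point of the cell costs at most \<open>2 \<omega>\<^sub>\<lambda>(\<Delta>) \<integral>\<parallel>x\<^sub>\<gamma>\<parallel>\<close>
  over the cell, and the frozen kernel annihilates \<open>x\<^sub>\<gamma> - v\<^sub>i\<close>. Rounding \<open>\<parallel>v\<^sub>i\<parallel>\<close> down to the grid and its
  direction to the \<open>\<sigma>\<close>-net costs \<open>\<delta> + \<gamma>\<sigma>\<close>, and Jensen's inequality puts the resulting step
  function into the discretised ball. Finally \<open>K - K\<^sub>\<lambda>\<close> contributes pointwise at most
  \<open>2r \<parallel>K(\<xi>,\<cdot>) - K\<^sub>\<lambda>(\<xi>,\<cdot>)\<parallel>\<^sub>q\<close> by Hoelder, and Minkowski's inequality turns the pointwise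
  bound into the bound in \<open>L\<^sub>q\<close>, where the first term contributes at most \<open>\<lambda>\<close>.
\<close>

section \<open>Hoelder and Minkowski inequalities\<close>

lemma conjugate_exponent_gt_one:
  fixes p q :: real
  assumes "p > 1" "1 / p + 1 / q = 1"
  shows "q > 1"
proof -
  have "1 / q = 1 - 1 / p" "0 < 1 - 1 / p" "1 - 1 / p < 1"
    using assms by auto
  then have "0 < 1 / q" "1 / q < 1" by auto
  then show ?thesis by (simp add: divide_less_eq_1_pos)
qed

lemma powr_add_le_two_powr:
  fixes a b q :: real
  assumes "a \<ge> 0" "b \<ge> 0" "q \<ge> 0"
  shows "(a + b) powr q \<le> 2 powr q * (a powr q + b powr q)"
proof -
  have "(a + b) powr q \<le> (2 * max a b) powr q"
    using assms by (intro powr_mono2) auto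
  also have "\<dots> = 2 powr q * max a b powr q"
    using assms by (simp add: powr_mult)
  also have "max a b powr q \<le> a powr q + b powr q"
    by (simp add: max_def)
  finally show ?thesis by simp
qed

lemma Holder_inequality:
  fixes f g :: "'a \<Rightarrow> real" and p q :: real
  assumes pq: "p > 1" "1 / p + 1 / q = 1"
    and f: "f \<in> borel_measurable M" "\<And>x. x \<in> space M \<Longrightarrow> f x \<ge> 0"
      "integrable M (\<lambda>x. f x powr p)"
    and g: "g \<in> borel_measurable M" "\<And>x. x \<in> space M \<Longrightarrow> g x \<ge> 0"
      "integrable M (\<lambda>x. g x powr q)"
  shows "integrable M (\<lambda>x. f x * g x)"
    and "(\<integral>x. f x * g x \<partial>M) \<le> (\<integral>x. f x powr p \<partial>M) powr (1 / p) * (\<integral>x. g x powr q \<partial>M) powr (1 / q)"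
proof -
  have q: "q > 1" using pq by (rule conjugate_exponent_gt_one)
  have Young: "f x * g x \<le> f x powr p / p + g x powr q / q" if "x \<in> space M" for x
    using Youngs_inequality pq q f(2) g(2) that by blast
  show int: "integrable M (\<lambda>x. f x * g x)"
  proof (rule Bochner_Integration.integrable_bound)
    show "integrable M (\<lambda>x. f x powr p / p + g x powr q / q)" using f(3) g(3) by auto
    show "AE x in M. norm (f x * g x) \<le> norm (f x powr p / p + g x powr q / q)"
      using Young f(2) g(2) by (intro AE_I2) (simp add: order_trans[OF _ abs_ge_self])
  qed (use f(1) g(1) in measurable)
  define A where "A = (\<integral>x. f x powr p \<partial>M)"
  define B where "B = (\<integral>x. g x powr q \<partial>M)"
  have "A \<ge> 0" "B \<ge> 0" unfolding A_def B_def by (simp_all add: integral_nonneg_AE)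
  show "(\<integral>x. f x * g x \<partial>M) \<le> A powr (1 / p) * B powr (1 / q)"
  proof (cases "A = 0 \<or> B = 0")
    case True
    then have "AE x in M. f x powr p = 0 \<or> g x powr q = 0"
      using integral_nonneg_eq_0_iff_AE[OF f(3)] integral_nonneg_eq_0_iff_AE[OF g(3)]
      unfolding A_def B_def by auto
    then have "AE x in M. f x * g x = 0" by (rule AE_mp) (auto intro!: AE_I2)
    then show ?thesis by (simp add: integral_eq_zero_AE)
  next
    case False
    with \<open>A \<ge> 0\<close> \<open>B \<ge> 0\<close> have A: "A > 0" and B: "B > 0" by auto
    define \<alpha> where "\<alpha> = A powr (1 / p)"
    define \<beta> where "\<beta> = B powr (1 / q)"
    have "\<alpha> > 0" "\<beta> > 0" using A B by (auto simp: \<alpha>_def \<beta>_def)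
    have pointwise: "f x * g x \<le> \<alpha> * \<beta> * (f x powr p / A / p + g x powr q / B / q)"
      if x: "x \<in> space M" for x
    proof -
      have "(f x / \<alpha>) * (g x / \<beta>) \<le> (f x / \<alpha>) powr p / p + (g x / \<beta>) powr q / q"
        using Youngs_inequality[OF pq(1) q pq(2), of "f x / \<alpha>" "g x / \<beta>"] f(2)[OF x] g(2)[OF x] \<open>\<alpha> > 0\<close> \<open>\<beta> > 0\<close> by auto
      moreover have "(f x / \<alpha>) powr p = f x powr p / A" "(g x / \<beta>) powr q = g x powr q / B"
        using f(2)[OF x] g(2)[OF x] A B pq q by (simp_all add: powr_divide \<alpha>_def \<beta>_def powr_powr)
      ultimately show ?thesis using \<open>\<alpha> > 0\<close> \<open>\<beta> > 0\<close> by (simp add: field_simps)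
    qed
    have "(\<integral>x. f x * g x \<partial>M) \<le> (\<integral>x. \<alpha> * \<beta> * (f x powr p / A / p + g x powr q / B / q) \<partial>M)"
      using int f(3) g(3) pointwise by (intro integral_mono) auto
    also have "\<dots> = \<alpha> * \<beta> * (A / A / p + B / B / q)"
      using f(3) g(3) by (simp add: A_def B_def)
    also have "\<dots> = \<alpha> * \<beta>" using A B pq by simp
    finally show ?thesis by (simp add: \<alpha>_def \<beta>_def)
  qed
qed

lemma Minkowski_inequality_const:
  fixes f :: "'a \<Rightarrow> real" and q c :: real
  assumes q: "q > 1" and fin: "finite_measure M"
    and f: "f \<in> borel_measurable M" "\<And>x. x \<in> space M \<Longrightarrow> f x \<ge> 0"
      "integrable M (\<lambda>x. f x powr q)"
    and c: "c \<ge> 0"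
  shows "integrable M (\<lambda>x. (f x + c) powr q)"
    and "(\<integral>x. (f x + c) powr q \<partial>M) powr (1 / q)
           \<le> (\<integral>x. f x powr q \<partial>M) powr (1 / q) + c * measure M (space M) powr (1 / q)"
proof -
  interpret finite_measure M by (rule fin)
  show int: "integrable M (\<lambda>x. (f x + c) powr q)"
  proof (rule Bochner_Integration.integrable_bound)
    show "integrable M (\<lambda>x. 2 powr q * (f x powr q + c powr q))" using f(3) by auto
    show "AE x in M. norm ((f x + c) powr q) \<le> norm (2 powr q * (f x powr q + c powr q))"
      using powr_add_le_two_powr f(2) c q by (intro AE_I2) auto
  qed (use f(1) in measurable)
  \<comment> \<open>Write \<open>(f + c)\<^sup>q = f h + c h\<close> with \<open>h = (f + c)\<^sup>q\<^sup>-\<^sup>1\<close> and apply Hoelder to both terms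
    with the exponent \<open>q'\<close> conjugate to \<open>q\<close>, noting \<open>h\<^sup>q\<^sup>' = (f + c)\<^sup>q\<close>.\<close>
  define q' where "q' = q / (q - 1)"
  have q': "q' > 1" "1 / q + 1 / q' = 1" using q by (auto simp: q'_def field_simps)
  define h where "h x = (f x + c) powr (q - 1)" for x
  have h: "h \<in> borel_measurable M" "\<And>x. x \<in> space M \<Longrightarrow> h x \<ge> 0"
    unfolding h_def using f(1) by auto
  have h_powr: "h x powr q' = (f x + c) powr q" if "x \<in> space M" for x
    using f(2)[OF that] c q by (simp add: h_def powr_powr q'_def)
  have h_int: "integrable M (\<lambda>x. h x powr q')"
    using int by (subst Bochner_Integration.integrable_cong[OF refl h_powr]) auto
  define I where "I = (\<integral>x. (f x + c) powr q \<partial>M)"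
  define A where "A = (\<integral>x. f x powr q \<partial>M)"
  have I_eq: "(\<integral>x. h x powr q' \<partial>M) = I"
    unfolding I_def by (rule Bochner_Integration.integral_cong[OF refl]) (auto simp: h_powr)
  note Holder_f = Holder_inequality[OF q q'(2) f h h_int]
  note Holder_c = Holder_inequality[OF q q'(2) _ _ _ h h_int, of "\<lambda>x. c"]
  have split: "(f x + c) powr q = f x * h x + c * h x" if "x \<in> space M" for x
  proof (cases "f x + c = 0")
    case False
    then have "f x + c > 0" using f(2)[OF that] c by linarith
    then show ?thesis
      using powr_add[of "f x + c" 1 "q - 1"] by (simp add: h_def algebra_simps)
  qed (use f(2)[OF that] c q in \<open>simp add: h_def\<close>)
  have "I = (\<integral>x. f x * h x + c * h x \<partial>M)"
    unfolding I_def by (rule Bochner_Integration.integral_cong[OF refl]) (simp add: split)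
  also have "\<dots> = (\<integral>x. f x * h x \<partial>M) + (\<integral>x. c * h x \<partial>M)"
    using Holder_f(1) Holder_c(1) c by (intro Bochner_Integration.integral_add) auto
  also have "\<dots> \<le> A powr (1 / q) * I powr (1 / q') + (c powr q * measure M (space M)) powr (1 / q) * I powr (1 / q')"
    using Holder_f(2) Holder_c(2) c by (simp add: A_def I_eq mult.commute)
  also have "(c powr q * measure M (space M)) powr (1 / q) = c * measure M (space M) powr (1 / q)"
    using c q by (simp add: powr_mult powr_powr)
  finally have le: "I \<le> (A powr (1 / q) + c * measure M (space M) powr (1 / q)) * I powr (1 / q')"
    by (simp add: algebra_simps)
  show "I powr (1 / q) \<le> A powr (1 / q) + c * measure M (space M) powr (1 / q)"
  proof (cases "I = 0")
    case False
    then have "I > 0" unfolding I_def by (simp add: integral_nonneg_AE order_less_le)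
    then have "I = I powr (1 / q) * I powr (1 / q')" using q' by (simp add: powr_add[symmetric])
    with le have "I powr (1 / q) * I powr (1 / q')
        \<le> (A powr (1 / q) + c * measure M (space M) powr (1 / q)) * I powr (1 / q')"
      by simp
    with \<open>I > 0\<close> show ?thesis by simp
  qed (use c in simp)
qed

lemma integrable_norm_diff_powr:
  fixes f g :: "'a \<Rightarrow> 'b::{banach, second_countable_topology}"
  assumes fin: "finite_measure M" and q: "q \<ge> 0"
    and f: "f \<in> borel_measurable M" "integrable M (\<lambda>z. norm (f z) powr q)"
    and g: "g \<in> borel_measurable M" "\<And>z. z \<in> space M \<Longrightarrow> norm (g z) \<le> B"
  shows "integrable M (\<lambda>z. norm (f z - g z) powr q)"
proof (rule Bochner_Integration.integrable_bound)
  show "integrable M (\<lambda>z. 2 powr q * (norm (f z) powr q + B powr q))"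
    using Bochner_Integration.integrable_add[OF f(2) finite_measure.integrable_const[OF fin, of "B powr q"]]
    by simp
  show "AE z in M. norm (norm (f z - g z) powr q) \<le> norm (2 powr q * (norm (f z) powr q + B powr q))"
  proof (intro AE_I2)
    fix z assume z: "z \<in> space M"
    have "norm (f z - g z) powr q \<le> (norm (f z) + B) powr q"
      using norm_triangle_ineq4[of "f z" "g z"] g(2)[OF z] q by (intro powr_mono2) auto
    also have "\<dots> \<le> 2 powr q * (norm (f z) powr q + B powr q)"
      using order_trans[OF norm_ge_zero g(2)[OF z]] q by (intro powr_add_le_two_powr) auto
    finally show "norm (norm (f z - g z) powr q) \<le> norm (2 powr q * (norm (f z) powr q + B powr q))"
      by simp
  qed
qed (use f(1) g(1) in measurable)

section \<open>Matrix-vector products\<close>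

lemma norm_matrix_vector_mult_le:
  fixes A :: "real^'n^'m"
  shows "norm (A *v x) \<le> norm A * norm x"
proof -
  have "(norm (A *v x))\<^sup>2 = (\<Sum>i\<in>UNIV. (A $ i \<bullet> x)\<^sup>2)"
    by (simp add: norm_vec_def L2_set_def sum_nonneg matrix_vector_mult_def inner_vec_def)
  also have "\<dots> \<le> (\<Sum>i\<in>UNIV. (norm (A $ i))\<^sup>2 * (norm x)\<^sup>2)"
  proof (rule sum_mono)
    fix i
    have "\<bar>A $ i \<bullet> x\<bar> \<le> norm (A $ i) * norm x" by (rule Cauchy_Schwarz_ineq2)
    then show "(A $ i \<bullet> x)\<^sup>2 \<le> (norm (A $ i))\<^sup>2 * (norm x)\<^sup>2"
      by (metis abs_ge_zero power2_abs power_mono power_mult_distrib)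
  qed
  also have "\<dots> = (norm A * norm x)\<^sup>2"
    by (simp add: norm_vec_def L2_set_def sum_nonneg sum_distrib_right[symmetric] power_mult_distrib)
  finally show ?thesis
    by (meson mult_nonneg_nonneg norm_ge_zero power2_le_imp_le)
qed

lemma bounded_bilinear_matrix_vector_mult:
  "bounded_bilinear ((*v) :: real^'n^'m \<Rightarrow> real^'n \<Rightarrow> real^'m)"
proof
  fix A A' :: "real^'n^'m" and x x' :: "real^'n" and c :: real
  show "(A + A') *v x = A *v x + A' *v x" by (rule matrix_vector_mult_add_rdistrib)
  show "A *v (x + x') = A *v x + A *v x'" by (rule matrix_vector_right_distrib)
  show "(c *\<^sub>R A) *v x = c *\<^sub>R (A *v x)" by (simp add: scaleR_matrix_vector_assoc)
  show "A *v (c *\<^sub>R x) = c *\<^sub>R (A *v x)" by (rule matrix_vector_mult_scaleR)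
  show "\<exists>K. \<forall>A x. norm (A *v x) \<le> norm (A :: real^'n^'m) * norm (x :: real^'n) * K"
    by (rule exI[of _ 1]) (simp add: norm_matrix_vector_mult_le)
qed

lemma borel_measurable_matrix_vector_mult [measurable]:
  fixes f :: "'a \<Rightarrow> real^'n^'m" and g :: "'a \<Rightarrow> real^'n"
  assumes "f \<in> borel_measurable M" "g \<in> borel_measurable M"
  shows "(\<lambda>x. f x *v g x) \<in> borel_measurable M"
proof -
  have "continuous_on UNIV (\<lambda>z :: (real^'n^'m) \<times> (real^'n). fst z *v snd z)"
    by (intro bounded_bilinear.continuous_on[OF bounded_bilinear_matrix_vector_mult] continuous_intros)
  from borel_measurable_continuous_Pair[OF assms this] show ?thesis by simp
qed

lemma integrable_matrix_vector_mult_dominated: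
  fixes k :: "'a \<Rightarrow> real^'n^'m" and w :: "'a \<Rightarrow> real^'n"
  assumes "k \<in> borel_measurable M" "w \<in> borel_measurable M"
    and "\<And>s. s \<in> space M \<Longrightarrow> norm (k s) \<le> h s" "integrable M (\<lambda>s. h s * norm (w s))"
  shows "integrable M (\<lambda>s. k s *v w s)"
proof (rule Bochner_Integration.integrable_bound[OF assms(4)])
  show "AE s in M. norm (k s *v w s) \<le> norm (h s * norm (w s))"
  proof (intro AE_I2)
    fix s assume "s \<in> space M"
    then have "norm (k s *v w s) \<le> h s * norm (w s)"
      using assms(3) by (intro order_trans[OF norm_matrix_vector_mult_le] mult_right_mono) auto
    then show "norm (k s *v w s) \<le> norm (h s * norm (w s))" by simp
  qed
qed (use assms(1,2) in measurable)

section \<open>Balls in L_p and Delta-partitions\<close>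

lemma Lp_ballD:
  assumes x: "x \<in> Lp_ball p Om r" and p: "p > 0"
  shows "x \<in> borel_measurable (lebesgue_on Om)"
    and "integrable (lebesgue_on Om) (\<lambda>s. norm (x s) powr p)"
    and "(\<integral>s. norm (x s) powr p \<partial>lebesgue_on Om) \<le> r powr p"
    and "r \<ge> 0"
proof -
  show "x \<in> borel_measurable (lebesgue_on Om)" "integrable (lebesgue_on Om) (\<lambda>s. norm (x s) powr p)"
    using x unfolding Lp_ball_def Lp_space_def by auto
  let ?I = "\<integral>s. norm (x s) powr p \<partial>lebesgue_on Om"
  have "?I \<ge> 0" by (simp add: integral_nonneg_AE)
  have norm_le: "?I powr (1 / p) \<le> r" using x unfolding Lp_ball_def Lp_norm_def by simp
  then show "r \<ge> 0" by (rule order_trans[OF powr_ge_zero])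
  have "?I = (?I powr (1 / p)) powr p" using \<open>?I \<ge> 0\<close> p by (simp add: powr_powr)
  also have "\<dots> \<le> r powr p" using norm_le p by (intro powr_mono2) auto
  finally show "?I \<le> r powr p" .
qed

lemma Lp_ball_Holder:
  fixes x :: "'k::euclidean_space \<Rightarrow> 'b::euclidean_space"
  assumes pq: "p > 1" "1 / p + 1 / q = 1" and x: "x \<in> Lp_ball p Om r"
    and g: "g \<in> borel_measurable (lebesgue_on Om)" "\<And>s. g s \<ge> 0"
      "integrable (lebesgue_on Om) (\<lambda>s. g s powr q)"
  shows "integrable (lebesgue_on Om) (\<lambda>s. norm (x s) * g s)"
    and "(\<integral>s. norm (x s) * g s \<partial>lebesgue_on Om) \<le> r * (\<integral>s. g s powr q \<partial>lebesgue_on Om) powr (1 / q)"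
proof -
  have p: "p > 0" using pq by simp
  note x' = Lp_ballD[OF x p]
  have nx: "(\<lambda>s. norm (x s)) \<in> borel_measurable (lebesgue_on Om)" using x'(1) by measurable
  note Holder = Holder_inequality[OF pq nx _ x'(2) g(1) _ g(3)]
  show "integrable (lebesgue_on Om) (\<lambda>s. norm (x s) * g s)" using Holder(1) g(2) by simp
  have "(\<integral>s. norm (x s) powr p \<partial>lebesgue_on Om) powr (1 / p) \<le> (r powr p) powr (1 / p)"
    using x'(3) p by (intro powr_mono2) (auto intro: integral_nonneg_AE)
  also have "\<dots> = r" using x'(4) p by (simp add: powr_powr)
  finally show "(\<integral>s. norm (x s) * g s \<partial>lebesgue_on Om) \<le> r * (\<integral>s. g s powr q \<partial>lebesgue_on Om) powr (1 / q)"
    using Holder(2) g(2) by (simp add: order_trans mult_right_mono)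
qed

lemma Lp_ball_integral_norm_le:
  fixes x :: "'k::euclidean_space \<Rightarrow> 'b::euclidean_space"
  assumes Om: "Om \<in> lmeasurable" and pq: "p > 1" "1 / p + 1 / q = 1" and x: "x \<in> Lp_ball p Om r"
  shows "integrable (lebesgue_on Om) (\<lambda>s. norm (x s))"
    and "(\<integral>s. norm (x s) \<partial>lebesgue_on Om) \<le> measure lebesgue Om powr (1 / q) * r"
proof -
  interpret finite_measure "lebesgue_on Om" using Om by (rule finite_measure_lebesgue_on)
  note Holder = Lp_ball_Holder[OF pq x, of "\<lambda>_. 1"]
  show "integrable (lebesgue_on Om) (\<lambda>s. norm (x s))" using Holder(1) by simp
  show "(\<integral>s. norm (x s) \<partial>lebesgue_on Om) \<le> measure lebesgue Om powr (1 / q) * r"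
    using Holder(2) Om by (simp add: measure_restrict_space mult.commute)
qed

lemma Lp_norm_le_of_AE_bound:
  fixes u :: "'k::euclidean_space \<Rightarrow> 'b::real_normed_vector"
  assumes Om: "Om \<in> lmeasurable" and q: "q > 1"
    and g: "g \<in> borel_measurable (lebesgue_on Om)" "\<And>\<xi>. g \<xi> \<ge> 0" "integrable (lebesgue_on Om) g"
    and c: "c \<ge> 0" and C: "C \<ge> 0"
    and bound: "AE \<xi> in lebesgue_on Om. norm (u \<xi>) \<le> c * g \<xi> powr (1 / q) + C"
  shows "Lp_norm q Om u \<le> c * (\<integral>\<xi>. g \<xi> \<partial>lebesgue_on Om) powr (1 / q) + C * measure lebesgue Om powr (1 / q)"
proof -
  let ?L = "lebesgue_on Om"
  have fin: "finite_measure ?L" using Om by (rule finite_measure_lebesgue_on)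
  define f where "f \<xi> = c * g \<xi> powr (1 / q)" for \<xi>
  have f_powr: "f \<xi> powr q = c powr q * g \<xi>" for \<xi>
    using c g(2) q by (simp add: f_def powr_mult powr_powr)
  have "f \<in> borel_measurable ?L" unfolding f_def[abs_def] using g(1) by measurable
  moreover have "f \<xi> \<ge> 0" for \<xi> using c by (simp add: f_def)
  moreover have "integrable ?L (\<lambda>\<xi>. f \<xi> powr q)" using g(3) by (simp add: f_powr)
  ultimately have f: "f \<in> borel_measurable ?L" "\<And>\<xi>. \<xi> \<in> space ?L \<Longrightarrow> f \<xi> \<ge> 0"
    "integrable ?L (\<lambda>\<xi>. f \<xi> powr q)" by auto
  note Minkowski = Minkowski_inequality_const[OF q fin f C]
  have "(\<integral>\<xi>. f \<xi> powr q \<partial>?L) powr (1 / q) = c * (\<integral>\<xi>. g \<xi> \<partial>?L) powr (1 / q)"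
    using c q g(2) by (simp add: f_powr powr_mult powr_powr integral_nonneg_AE)
  moreover have "measure ?L (space ?L) = measure lebesgue Om"
    using Om by (simp add: measure_restrict_space)
  ultimately have Minkowski_le: "(\<integral>\<xi>. (f \<xi> + C) powr q \<partial>?L) powr (1 / q)
      \<le> c * (\<integral>\<xi>. g \<xi> \<partial>?L) powr (1 / q) + C * measure lebesgue Om powr (1 / q)"
    using Minkowski(2) by simp
  show ?thesis
  proof (cases "integrable ?L (\<lambda>\<xi>. norm (u \<xi>) powr q)")
    case True
    have "AE \<xi> in ?L. norm (u \<xi>) powr q \<le> (f \<xi> + C) powr q"
      using bound
    proof eventually_elim
      case (elim \<xi>)
      then show ?case using q by (intro powr_mono2) (auto simp: f_def)
    qed
    then have "(\<integral>\<xi>. norm (u \<xi>) powr q \<partial>?L) \<le> (\<integral>\<xi>. (f \<xi> + C) powr q \<partial>?L)"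
      using True Minkowski(1) by (intro integral_mono_AE)
    then have "Lp_norm q Om u \<le> (\<integral>\<xi>. (f \<xi> + C) powr q \<partial>?L) powr (1 / q)"
      unfolding Lp_norm_def using q by (intro powr_mono2) (auto intro: integral_nonneg_AE)
    with Minkowski_le show ?thesis by linarith
  next
    case False
    \<comment> \<open>the Bochner integral of a non-integrable function is \<open>0\<close>\<close>
    then have "Lp_norm q Om u = 0" by (simp add: Lp_norm_def not_integrable_integral_eq)
    with c C show ?thesis by simp
  qed
qed

lemma Delta_partitionD:
  assumes "Delta_partition Om D N P" "i < N"
  shows "P i \<in> sets lebesgue" "P i \<subseteq> Om" "diameter (P i) \<le> D"
  using assms unfolding Delta_partition_def by auto

lemma Delta_partition_sets_lebesgue:
  assumes "Delta_partition Om D N P"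
  shows "Om \<in> sets lebesgue"
proof -
  have "Om = (\<Union>i<N. P i)" using assms unfolding Delta_partition_def by auto
  then show ?thesis using assms unfolding Delta_partition_def by auto
qed

lemma Delta_partition_sets_lebesgue_on:
  assumes part: "Delta_partition Om D N P" and i: "i < N"
  shows "P i \<in> sets (lebesgue_on Om)"
  using Delta_partition_sets_lebesgue[OF part] Delta_partitionD[OF part i]
  by (simp add: sets_restrict_space_iff)

lemma Delta_partition_sum_indicator_scaleR:
  assumes part: "Delta_partition Om D N P" and i: "i < N" and s: "s \<in> P i"
  shows "(\<Sum>k<N. indicator (P k) s *\<^sub>R c k) = (c i :: 'b::real_vector)"
proof -
  have "(\<Sum>k<N. indicator (P k) s *\<^sub>R c k) = (\<Sum>k\<in>{i}. indicator (P k) s *\<^sub>R c k)"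
  proof (rule sum.mono_neutral_cong_right)
    show "\<forall>k\<in>{..<N} - {i}. indicator (P k) s *\<^sub>R c k = 0"
    proof
      fix k assume "k \<in> {..<N} - {i}"
      then have "P i \<inter> P k = {}" using part i unfolding Delta_partition_def by auto
      then show "indicator (P k) s *\<^sub>R c k = 0" using s by (auto simp: indicator_def)
    qed
  qed (use i in auto)
  then show ?thesis using s by simp
qed

lemma Delta_partition_piecewise:
  assumes part: "Delta_partition Om D N P" and s: "s \<in> Om"
    and f: "\<And>i. i < N \<Longrightarrow> s \<in> P i \<Longrightarrow> f s = g i s"
  shows "f s = (\<Sum>i<N. indicator (P i) s *\<^sub>R (g i s :: 'b::real_vector))"
proof -
  obtain i where i: "i < N" "s \<in> P i" using part s unfolding Delta_partition_def by blast
  have "(\<Sum>k<N. indicator (P k) s *\<^sub>R g k s) = g i s"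
    by (rule Delta_partition_sum_indicator_scaleR[OF part i])
  with f[OF i] show ?thesis by simp
qed

lemma Delta_partition_sum_set_integral:
  fixes f :: "'k::euclidean_space \<Rightarrow> 'b::{banach, second_countable_topology}"
  assumes part: "Delta_partition Om D N P" and f: "integrable (lebesgue_on Om) f"
  shows "(\<Sum>i<N. LINT s:P i|lebesgue_on Om. f s) = (\<integral>s. f s \<partial>lebesgue_on Om)"
proof -
  have "(\<Sum>i<N. LINT s:P i|lebesgue_on Om. f s) = (\<integral>s. (\<Sum>i<N. indicator (P i) s *\<^sub>R f s) \<partial>lebesgue_on Om)"
    unfolding set_lebesgue_integral_def
    using Delta_partition_sets_lebesgue_on[OF part] f
    by (intro Bochner_Integration.integral_sum[symmetric] integrable_mult_indicator) auto
  also have "\<dots> = (\<integral>s. f s \<partial>lebesgue_on Om)"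
    by (intro Bochner_Integration.integral_cong refl Delta_partition_piecewise[OF part, symmetric]) auto
  finally show ?thesis .
qed

lemma Delta_partition_measure:
  assumes part: "Delta_partition Om D N P" and i: "i < N"
  shows "measure (lebesgue_on Om) (P i) = measure lebesgue (P i)"
  using Delta_partition_sets_lebesgue[OF part] Delta_partitionD(2)[OF part i]
  by (simp add: measure_restrict_space)

lemma Delta_partition_sum_measure:
  assumes part: "Delta_partition Om D N P" and Om: "Om \<in> lmeasurable"
  shows "(\<Sum>i<N. measure (lebesgue_on Om) (P i)) = measure lebesgue Om"
proof -
  interpret finite_measure "lebesgue_on Om" using Om by (rule finite_measure_lebesgue_on)
  have "(\<Sum>i<N. measure (lebesgue_on Om) (P i)) = (\<Sum>i<N. LINT s:P i|lebesgue_on Om. 1)"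
    using Delta_partition_sets_lebesgue_on[OF part] emeasure_finite
    by (intro sum.cong) (auto simp: set_integral_const top_unique)
  also have "\<dots> = (\<integral>s. 1 \<partial>lebesgue_on Om)"
    by (rule Delta_partition_sum_set_integral[OF part]) simp
  also have "\<dots> = measure lebesgue Om"
    using Om by (simp add: measure_restrict_space)
  finally show ?thesis .
qed

section \<open>Averages over a cell\<close>

definition set_average :: "'a measure \<Rightarrow> 'a set \<Rightarrow> ('a \<Rightarrow> 'b::{banach, second_countable_topology}) \<Rightarrow> 'b" where
  "set_average M A f = (if measure M A = 0 then 0 else (1 / measure M A) *\<^sub>R (LINT s:A|M. f s))"

lemma set_average_scaleR:
  assumes "finite_measure M" "A \<in> sets M"
  shows "measure M A *\<^sub>R set_average M A f = (LINT s:A|M. f s)"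
proof (cases "measure M A = 0")
  case True
  then have "A \<in> null_sets M"
    using assms by (simp add: finite_measure.emeasure_eq_measure null_setsI)
  then have "AE s in M. indicator A s *\<^sub>R f s = 0"
    by (rule AE_mp[OF AE_not_in]) (auto intro!: AE_I2)
  then show ?thesis using True
    by (simp add: set_average_def set_lebesgue_integral_def integral_eq_zero_AE)
qed (simp add: set_average_def)

lemma norm_set_average_le:
  assumes "finite_measure M" "A \<in> sets M"
  shows "measure M A * norm (set_average M A f) \<le> (LINT s:A|M. norm (f s))"
proof -
  have "measure M A * norm (set_average M A f) = norm (LINT s:A|M. f s)"
    using set_average_scaleR[OF assms, of f] by (metis measure_nonneg norm_scaleR abs_of_nonneg)
  also have "\<dots> \<le> (LINT s:A|M. norm (f s))"
    using integral_norm_bound[of M "\<lambda>s. indicator A s *\<^sub>R f s"]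
    by (simp add: set_lebesgue_integral_def)
  finally show ?thesis .
qed

lemma set_integrable_bounded:
  fixes f :: "'a \<Rightarrow> 'b::{banach, second_countable_topology}"
  assumes "finite_measure M" "A \<in> sets M" "f \<in> borel_measurable M"
    and "\<And>s. s \<in> space M \<Longrightarrow> norm (f s) \<le> B"
  shows "set_integrable M A f"
  unfolding set_integrable_def
  using assms by (intro finite_measure.integrable_const_bound[where B=B] integrable_mult_indicator AE_I2)
    (auto simp: indicator_def)

lemma norm_set_average_le_bound:
  assumes fin: "finite_measure M" and A: "A \<in> sets M" and f: "f \<in> borel_measurable M"
    and bound: "\<And>s. s \<in> space M \<Longrightarrow> norm (f s) \<le> B" and "B \<ge> 0"
  shows "norm (set_average M A f) \<le> B"
proof (cases "measure M A = 0")
  case False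
  then have "measure M A > 0" by (simp add: order_less_le)
  have "measure M A * norm (set_average M A f) \<le> (LINT s:A|M. norm (f s))"
    by (rule norm_set_average_le[OF fin A])
  also have "\<dots> \<le> (LINT s:A|M. B)"
  proof (rule set_integral_mono)
    show "set_integrable M A (\<lambda>s. norm (f s))"
      using set_integrable_bounded[OF fin A, of "\<lambda>s. norm (f s)" B] f bound by auto
    show "set_integrable M A (\<lambda>_. B)"
      using set_integrable_bounded[OF fin A, of "\<lambda>_. B" "\<bar>B\<bar>"] by auto
  qed (use bound A sets.sets_into_space in auto)
  also have "\<dots> = measure M A * B"
    using finite_measure.emeasure_finite[OF fin] A by (simp add: set_integral_const)
  finally show ?thesis using \<open>measure M A > 0\<close> by simp
qed (simp add: set_average_def \<open>B \<ge> 0\<close>)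

lemma set_integral_norm_le_Holder:
  assumes fin: "finite_measure M" and A: "A \<in> sets M" and f: "f \<in> borel_measurable M"
    and bound: "\<And>s. s \<in> space M \<Longrightarrow> norm (f s) \<le> B" and p: "p > 1"
  shows "(LINT s:A|M. norm (f s)) \<le> (LINT s:A|M. norm (f s) powr p) powr (1 / p) * measure M A powr (1 - 1 / p)"
proof -
  interpret finite_measure M by (rule fin)
  define q where "q = p / (p - 1)"
  have pq: "1 / p + 1 / q = 1" "1 / q = 1 - 1 / p" using p by (simp_all add: q_def field_simps)
  let ?g = "\<lambda>s. indicator A s * norm (f s)"
  have g_int: "integrable M (\<lambda>s. ?g s powr p)"
    using A f bound p
    by (intro integrable_const_bound[where B="B powr p"] AE_I2) (auto simp: indicator_def intro!: powr_mono2)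
  have ind_int: "integrable M (\<lambda>s. indicator A s powr q :: real)"
    using A by (intro integrable_const_bound[where B=1] AE_I2) (auto simp: indicator_def)
  have "(LINT s:A|M. norm (f s)) = (\<integral>s. ?g s * indicator A s \<partial>M)"
    unfolding set_lebesgue_integral_def by (intro Bochner_Integration.integral_cong) (auto simp: indicator_def)
  also have "\<dots> \<le> (\<integral>s. ?g s powr p \<partial>M) powr (1 / p) * (\<integral>s. indicator A s powr q \<partial>M) powr (1 / q)"
    using A f by (intro Holder_inequality(2)[OF p pq(1) _ _ g_int _ _ ind_int]) auto
  also have "(\<integral>s. ?g s powr p \<partial>M) = (LINT s:A|M. norm (f s) powr p)"
    unfolding set_lebesgue_integral_def by (intro Bochner_Integration.integral_cong) (auto simp: indicator_def)
  also have "(\<integral>s. indicator A s powr q \<partial>M) = (\<integral>s. indicator A s \<partial>M)"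
    by (intro Bochner_Integration.integral_cong) (auto simp: indicator_def)
  also have "\<dots> = measure M A" using A sets.sets_into_space by (simp add: Int_absorb2)
  finally show ?thesis by (simp add: pq(2))
qed

lemma set_average_powr_le:
  assumes fin: "finite_measure M" and A: "A \<in> sets M" and f: "f \<in> borel_measurable M"
    and bound: "\<And>s. s \<in> space M \<Longrightarrow> norm (f s) \<le> B" and p: "p > 1"
  shows "measure M A * norm (set_average M A f) powr p \<le> (LINT s:A|M. norm (f s) powr p)"
proof (cases "measure M A = 0")
  case False
  let ?\<mu> = "measure M A" and ?I = "LINT s:A|M. norm (f s) powr p"
  have \<mu>: "?\<mu> > 0" using False by (simp add: order_less_le)
  have I: "?I \<ge> 0" by (simp add: set_lebesgue_integral_def integral_nonneg_AE)
  have "?\<mu> powr p * norm (set_average M A f) powr p = (?\<mu> * norm (set_average M A f)) powr p"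
    using \<mu> by (simp add: powr_mult)
  also have "\<dots> \<le> (?I powr (1 / p) * ?\<mu> powr (1 - 1 / p)) powr p"
    using order_trans[OF norm_set_average_le[OF fin A] set_integral_norm_le_Holder[OF fin A f bound p]] \<mu> p
    by (intro powr_mono2) auto
  also have "\<dots> = ?I * ?\<mu> powr (p - 1)"
    using I \<mu> p by (simp add: powr_mult powr_powr algebra_simps)
  finally have "?\<mu> * (?\<mu> powr (p - 1) * norm (set_average M A f) powr p) \<le> ?\<mu> powr (p - 1) * ?I"
    using \<mu> powr_add[of ?\<mu> 1 "p - 1"] by (simp add: algebra_simps)
  then show ?thesis using \<mu> by (simp add: algebra_simps)
qed (simp add: set_lebesgue_integral_def integral_nonneg_AE)

lemma set_integral_matrix_vector_mult:
  fixes C :: "real^'n^'m"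
  assumes "set_integrable M A f"
  shows "set_integrable M A (\<lambda>s. C *v f s)"
    and "(LINT s:A|M. C *v f s) = C *v (LINT s:A|M. f s)"
proof -
  have "(\<lambda>s. indicator A s *\<^sub>R (C *v f s)) = (\<lambda>s. C *v (indicator A s *\<^sub>R f s))"
    by (simp add: matrix_vector_mult_scaleR)
  then show "set_integrable M A (\<lambda>s. C *v f s)" "(LINT s:A|M. C *v f s) = C *v (LINT s:A|M. f s)"
    using integrable_bounded_linear[OF matrix_vector_mul_bounded_linear]
      integral_bounded_linear[OF matrix_vector_mul_bounded_linear] assms
    unfolding set_integrable_def set_lebesgue_integral_def by simp_all
qed

lemma set_integrable_matrix_vector_mult_bounded:
  fixes k :: "'a \<Rightarrow> real^'n^'m" and g :: "'a \<Rightarrow> real^'n"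
  assumes fin: "finite_measure M" and A: "A \<in> sets M"
    and k: "k \<in> borel_measurable M" "\<And>s. s \<in> space M \<Longrightarrow> norm (k s) \<le> K0"
    and g: "g \<in> borel_measurable M" "\<And>s. s \<in> space M \<Longrightarrow> norm (g s) \<le> G"
  shows "set_integrable M A (\<lambda>s. k s *v g s)"
proof (rule set_integrable_bounded[OF fin A _ order_trans[OF norm_matrix_vector_mult_le]])
  show "norm (k s) * norm (g s) \<le> K0 * G" if "s \<in> space M" for s
    using k(2)[OF that] g(2)[OF that] by (intro mult_mono) (auto intro: order_trans[OF norm_ge_zero])
qed (use k g in measurable)

lemma set_integral_sub_set_average:
  assumes fin: "finite_measure M" and A: "A \<in> sets M" and f: "set_integrable M A f"
  shows "(LINT s:A|M. f s - set_average M A f) = 0"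
proof -
  have const: "set_integrable M A (\<lambda>_. set_average M A f)"
    using set_integrable_bounded[OF fin A, of "\<lambda>_. set_average M A f"] by auto
  have "emeasure M A \<noteq> \<infinity>"
    using finite_measure.emeasure_finite[OF fin] by (simp add: top_unique)
  then have "(LINT s:A|M. set_average M A f) = measure M A *\<^sub>R set_average M A f"
    by (rule set_integral_const[OF A])
  then show ?thesis
    using set_integral_diff(2)[OF f const] set_average_scaleR[OF fin A, of f] by simp
qed

lemma set_integral_oscillation_le:
  fixes k :: "'a \<Rightarrow> real^'n^'m" and f :: "'a \<Rightarrow> real^'n"
  assumes fin: "finite_measure M" and A: "A \<in> sets M"
    and k: "k \<in> borel_measurable M" "\<And>s. s \<in> space M \<Longrightarrow> norm (k s) \<le> K0"
    and f: "f \<in> borel_measurable M" "\<And>s. s \<in> space M \<Longrightarrow> norm (f s) \<le> B"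
    and osc: "\<And>s t. s \<in> A \<Longrightarrow> t \<in> A \<Longrightarrow> norm (k s - k t) \<le> W"
  shows "norm (LINT s:A|M. k s *v (f s - set_average M A f)) \<le> 2 * W * (LINT s:A|M. norm (f s))"
proof (cases "A = {}")
  case False
  interpret finite_measure M by (rule fin)
  obtain s0 where s0: "s0 \<in> A" using False by blast
  have W: "W \<ge> 0" using osc[OF s0 s0] by simp
  define v where "v = set_average M A f"
  have fv: "norm (f s - v) \<le> B + norm v" if "s \<in> space M" for s
    using norm_triangle_ineq4[of "f s" v] f(2)[OF that] by linarith
  have int_f: "set_integrable M A f" by (rule set_integrable_bounded[OF fin A f])
  have int_fv: "set_integrable M A (\<lambda>s. f s - v)"
    using fv f(1) by (intro set_integrable_bounded[OF fin A]) auto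
  have int_kfv: "set_integrable M A (\<lambda>s. k s *v (f s - v))"
    using fv f(1) by (intro set_integrable_matrix_vector_mult_bounded[OF fin A k]) auto
  note int_frozen = set_integral_matrix_vector_mult[OF int_fv, of "k s0"]
  \<comment> \<open>Freezing the kernel at \<open>s0\<close> costs at most \<open>W\<close>, and the frozen part integrates to zero.\<close>
  have "(LINT s:A|M. k s *v (f s - v)) = (LINT s:A|M. (k s - k s0) *v (f s - v))"
    using set_integral_diff(2)[OF int_kfv int_frozen(1)] int_frozen(2)
      set_integral_sub_set_average[OF fin A int_f]
    by (simp add: matrix_vector_mult_diff_rdistrib v_def)
  also have "norm \<dots> \<le> (LINT s:A|M. W * norm (f s) + W * norm v)"
  proof (rule order_trans[OF set_integral_norm_bound], rule_tac [2] set_integral_mono)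
    show int_osc: "set_integrable M A (\<lambda>s. (k s - k s0) *v (f s - v))"
      using set_integral_diff(1)[OF int_kfv int_frozen(1)] by (simp add: matrix_vector_mult_diff_rdistrib)
    show "set_integrable M A (\<lambda>s. norm ((k s - k s0) *v (f s - v)))"
      using int_osc by (rule set_integrable_norm)
    show "set_integrable M A (\<lambda>s. W * norm (f s) + W * norm v)"
      using f W by (intro set_integrable_bounded[OF fin A, where B="W * B + W * norm v"]) (auto intro: mult_left_mono)
    fix s assume "s \<in> A"
    then show "norm ((k s - k s0) *v (f s - v)) \<le> W * norm (f s) + W * norm v"
      using norm_matrix_vector_mult_le[of "k s - k s0" "f s - v"] osc[OF _ s0]
        norm_triangle_ineq4[of "f s" v] W
      by (smt (verit, best) distrib_left mult_mono norm_ge_zero)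
  qed
  also have "\<dots> = (LINT s:A|M. W * norm (f s)) + (LINT s:A|M. W * norm v)"
  proof (rule set_integral_add(2))
    show "set_integrable M A (\<lambda>s. W * norm (f s))"
      using f W by (intro set_integrable_bounded[OF fin A, where B="W * B"]) (auto intro: mult_left_mono)
    show "set_integrable M A (\<lambda>_. W * norm v)"
      using set_integrable_bounded[OF fin A, of "\<lambda>_. W * norm v" "W * norm v"] W by simp
  qed
  also have "\<dots> = W * (LINT s:A|M. norm (f s)) + W * (measure M A * norm v)"
    using set_integral_const[OF A, of "W * norm v"] emeasure_finite by (simp add: top_unique ac_simps)
  also have "\<dots> \<le> 2 * W * (LINT s:A|M. norm (f s))"
    using mult_left_mono[OF norm_set_average_le[OF fin A, of f] W] unfolding v_def by linarith
  finally show ?thesis by (simp add: v_def)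
qed (simp add: set_lebesgue_integral_def)

lemma set_integral_cell_le:
  fixes k :: "'a \<Rightarrow> real^'n^'m" and f :: "'a \<Rightarrow> real^'n"
  assumes fin: "finite_measure M" and A: "A \<in> sets M"
    and k: "k \<in> borel_measurable M" "\<And>s. s \<in> space M \<Longrightarrow> norm (k s) \<le> K0"
    and f: "f \<in> borel_measurable M" "\<And>s. s \<in> space M \<Longrightarrow> norm (f s) \<le> B"
    and osc: "\<And>s t. s \<in> A \<Longrightarrow> t \<in> A \<Longrightarrow> norm (k s - k t) \<le> W"
    and approx: "norm (set_average M A f - c) \<le> E"
  shows "norm (LINT s:A|M. k s *v (f s - c)) \<le> 2 * W * (LINT s:A|M. norm (f s)) + K0 * E * measure M A"
proof -
  interpret finite_measure M by (rule fin)
  define v where "v = set_average M A f"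
  have int_osc: "set_integrable M A (\<lambda>s. k s *v (f s - v))"
  proof (rule set_integrable_matrix_vector_mult_bounded[OF fin A k, where G="B + norm v"])
    show "norm (f s - v) \<le> B + norm v" if "s \<in> space M" for s
      using norm_triangle_ineq4[of "f s" v] f(2)[OF that] by linarith
  qed (use f(1) in measurable)
  have int_err: "set_integrable M A (\<lambda>s. k s *v (v - c))"
    by (rule set_integrable_matrix_vector_mult_bounded[OF fin A k, where G="norm (v - c)"]) auto
  have "(LINT s:A|M. k s *v (f s - c)) = (LINT s:A|M. k s *v (f s - v)) + (LINT s:A|M. k s *v (v - c))"
    using set_integral_add(2)[OF int_osc int_err] by (simp add: matrix_vector_right_distrib[symmetric])
  moreover have "norm (LINT s:A|M. k s *v (f s - v)) \<le> 2 * W * (LINT s:A|M. norm (f s))"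
    unfolding v_def by (rule set_integral_oscillation_le[OF fin A k f osc])
  moreover have "norm (LINT s:A|M. k s *v (v - c)) \<le> K0 * E * measure M A"
  proof -
    have "norm (LINT s:A|M. k s *v (v - c)) \<le> (LINT s:A|M. norm (k s *v (v - c)))"
      by (rule set_integral_norm_bound[OF int_err])
    also have "\<dots> \<le> (LINT s:A|M. K0 * E)"
    proof (rule set_integral_mono[OF set_integrable_norm[OF int_err]])
      show "set_integrable M A (\<lambda>_. K0 * E)"
        using set_integrable_bounded[OF fin A, of "\<lambda>_. K0 * E" "\<bar>K0 * E\<bar>"] by auto
      fix s assume "s \<in> A"
      then have "s \<in> space M" using A sets.sets_into_space by blast
      then show "norm (k s *v (v - c)) \<le> K0 * E"
        using k(2) approx unfolding v_def
        by (intro order_trans[OF norm_matrix_vector_mult_le] mult_mono) (auto intro: order_trans[OF norm_ge_zero])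
    qed
    also have "\<dots> = K0 * E * measure M A"
      using A emeasure_finite by (simp add: set_integral_const top_unique)
    finally show ?thesis .
  qed
  ultimately show ?thesis by (smt (verit) norm_triangle_ineq)
qed

section \<open>Discretising one row of a kernel\<close>

definition truncation :: "real \<Rightarrow> ('a \<Rightarrow> 'b::real_normed_vector) \<Rightarrow> 'a \<Rightarrow> 'b" where
  "truncation \<gamma> x s = (if norm (x s) \<le> \<gamma> then x s else 0)"

lemma borel_measurable_truncation [measurable]:
  fixes x :: "'a \<Rightarrow> 'b::real_normed_vector"
  assumes "x \<in> borel_measurable M"
  shows "truncation \<gamma> x \<in> borel_measurable M"
  unfolding truncation_def[abs_def] using assms by measurable

lemma norm_truncation_le:
  shows "\<gamma> \<ge> 0 \<Longrightarrow> norm (truncation \<gamma> x s) \<le> \<gamma>"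
    and "norm (truncation \<gamma> x s) \<le> norm (x s)"
  by (simp_all add: truncation_def)

lemma norm_diff_truncation_le:
  assumes "p > 1" "\<gamma> > 0"
  shows "norm (x s - truncation \<gamma> x s) \<le> norm (x s) powr p / \<gamma> powr (p - 1)"
proof (cases "norm (x s) \<le> \<gamma>")
  case False
  then have "\<gamma> powr (p - 1) \<le> norm (x s) powr (p - 1)" using assms by (intro powr_mono2) auto
  then have "norm (x s) * \<gamma> powr (p - 1) \<le> norm (x s) * norm (x s) powr (p - 1)"
    by (intro mult_left_mono) auto
  also have "\<dots> = norm (x s) powr p"
    using False assms powr_add[of "norm (x s)" 1 "p - 1"] by simp
  finally show ?thesis using False assms by (simp add: truncation_def field_simps)
qed (use assms in \<open>simp add: truncation_def\<close>)

lemma set_average_truncation_powr_le: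
  fixes x :: "'a \<Rightarrow> 'b::euclidean_space"
  assumes fin: "finite_measure M" and A: "A \<in> sets M" and p: "p > 1" and \<gamma>: "\<gamma> > 0"
    and x: "x \<in> borel_measurable M" "integrable M (\<lambda>s. norm (x s) powr p)"
  shows "measure M A * norm (set_average M A (truncation \<gamma> x)) powr p \<le> (LINT s:A|M. norm (x s) powr p)"
proof -
  have "measure M A * norm (set_average M A (truncation \<gamma> x)) powr p
      \<le> (LINT s:A|M. norm (truncation \<gamma> x s) powr p)"
    using x(1) \<gamma> p by (intro set_average_powr_le[OF fin A, where B=\<gamma>]) (auto simp: norm_truncation_le)
  also have "\<dots> \<le> (LINT s:A|M. norm (x s) powr p)"
  proof (rule set_integral_mono)
    show "set_integrable M A (\<lambda>s. norm (truncation \<gamma> x s) powr p)"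
      using x(1) \<gamma> p by (intro set_integrable_bounded[OF fin A, where B="\<gamma> powr p"])
        (auto simp: norm_truncation_le intro!: powr_mono2)
    show "set_integrable M A (\<lambda>s. norm (x s) powr p)"
      unfolding set_integrable_def using A x(2) by (rule integrable_mult_indicator)
  qed (use p in \<open>auto simp: norm_truncation_le intro!: powr_mono2\<close>)
  finally show ?thesis .
qed

lemma integral_truncation_tail_le:
  fixes k :: "'k::euclidean_space \<Rightarrow> real^'n^'m" and x :: "'k \<Rightarrow> real^'n"
  assumes p: "p > 1" and \<gamma>: "\<gamma> > 0" and x: "x \<in> Lp_ball p Om r"
    and k: "k \<in> borel_measurable (lebesgue_on Om)" "\<And>s. s \<in> Om \<Longrightarrow> norm (k s) \<le> K0" "K0 \<ge> 0"
  shows "integrable (lebesgue_on Om) (\<lambda>s. k s *v (x s - truncation \<gamma> x s))"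
    and "norm (\<integral>s. k s *v (x s - truncation \<gamma> x s) \<partial>lebesgue_on Om) \<le> K0 * r powr p / \<gamma> powr (p - 1)"
proof -
  have x': "x \<in> borel_measurable (lebesgue_on Om)" "integrable (lebesgue_on Om) (\<lambda>s. norm (x s) powr p)"
    "(\<integral>s. norm (x s) powr p \<partial>lebesgue_on Om) \<le> r powr p"
    using Lp_ballD[OF x] p by auto
  let ?b = "\<lambda>s. K0 / \<gamma> powr (p - 1) * norm (x s) powr p"
  have bound: "norm (k s *v (x s - truncation \<gamma> x s)) \<le> ?b s" if "s \<in> Om" for s
  proof -
    have "norm (k s *v (x s - truncation \<gamma> x s)) \<le> K0 * norm (x s - truncation \<gamma> x s)"
      using k(2)[OF that] by (intro order_trans[OF norm_matrix_vector_mult_le] mult_right_mono) auto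
    also have "\<dots> \<le> K0 * (norm (x s) powr p / \<gamma> powr (p - 1))"
      using norm_diff_truncation_le[OF p \<gamma>] k(3) by (rule mult_left_mono)
    finally show ?thesis by simp
  qed
  have b_int: "integrable (lebesgue_on Om) ?b" using x'(2) by simp
  show int: "integrable (lebesgue_on Om) (\<lambda>s. k s *v (x s - truncation \<gamma> x s))"
  proof (rule Bochner_Integration.integrable_bound[OF b_int])
    show "AE s in lebesgue_on Om. norm (k s *v (x s - truncation \<gamma> x s)) \<le> norm (?b s)"
      using bound k(3) by (intro AE_I2) simp
  qed (use k(1) x'(1) in measurable)
  have "norm (\<integral>s. k s *v (x s - truncation \<gamma> x s) \<partial>lebesgue_on Om) \<le> (\<integral>s. ?b s \<partial>lebesgue_on Om)"
    using bound by (intro Bochner_Integration.integral_norm_bound_integral[OF int b_int]) simp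
  also have "\<dots> = K0 / \<gamma> powr (p - 1) * (\<integral>s. norm (x s) powr p \<partial>lebesgue_on Om)"
    by simp
  also have "\<dots> \<le> K0 / \<gamma> powr (p - 1) * r powr p"
    using x'(3) k(3) by (intro mult_left_mono) auto
  finally show "norm (\<integral>s. k s *v (x s - truncation \<gamma> x s) \<partial>lebesgue_on Om) \<le> K0 * r powr p / \<gamma> powr (p - 1)"
    by simp
qed

lemma Delta_partition_oscillation:
  assumes Om: "bounded Om" and part: "Delta_partition Om D N P"
    and modulus: "\<And>s t. s \<in> Om \<Longrightarrow> t \<in> Om \<Longrightarrow> norm (s - t) \<le> D \<Longrightarrow> dist (k s) (k t) \<le> W"
    and i: "i < N" and st: "s \<in> P i" "t \<in> P i"
  shows "dist (k s) (k t) \<le> W"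
proof -
  have "bounded (P i)" using Delta_partitionD(2)[OF part i] Om bounded_subset by blast
  then have "norm (s - t) \<le> D"
    using diameter_bounded_bound[OF _ st] Delta_partitionD(3)[OF part i] by (simp add: dist_norm)
  then show ?thesis using modulus Delta_partitionD(2)[OF part i] st by blast
qed

lemma integral_step_function_split:
  fixes k :: "'k::euclidean_space \<Rightarrow> real^'n^'m" and f y :: "'k \<Rightarrow> real^'n"
  assumes part: "Delta_partition Om D N P" and Om: "Om \<in> lmeasurable"
    and k: "k \<in> borel_measurable (lebesgue_on Om)" "\<And>s. s \<in> Om \<Longrightarrow> norm (k s) \<le> K0"
    and f: "f \<in> borel_measurable (lebesgue_on Om)" "\<And>s. s \<in> Om \<Longrightarrow> norm (f s) \<le> B"
    and y: "\<And>i s. i < N \<Longrightarrow> s \<in> P i \<Longrightarrow> y s = c i"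
  shows "integrable (lebesgue_on Om) (\<lambda>s. k s *v (f s - y s))"
    and "(\<integral>s. k s *v (f s - y s) \<partial>lebesgue_on Om) = (\<Sum>i<N. LINT s:P i|lebesgue_on Om. k s *v (f s - c i))"
proof -
  let ?L = "lebesgue_on Om"
  have fin: "finite_measure ?L" using Om by (rule finite_measure_lebesgue_on)
  have cells_int: "integrable ?L (\<lambda>s. indicator (P i) s *\<^sub>R (k s *v (f s - c i)))" if i: "i < N" for i
  proof -
    have "set_integrable ?L (P i) (\<lambda>s. k s *v (f s - c i))"
    proof (rule set_integrable_matrix_vector_mult_bounded[OF fin Delta_partition_sets_lebesgue_on[OF part i] k(1),
          where G="B + norm (c i)"])
      show "norm (f s - c i) \<le> B + norm (c i)" if "s \<in> space ?L" for s
        using norm_triangle_ineq4[of "f s" "c i"] f(2) that by fastforce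
    qed (use k(2) f(1) in auto)
    then show ?thesis by (simp add: set_integrable_def)
  qed
  have pointwise: "k s *v (f s - y s) = (\<Sum>i<N. indicator (P i) s *\<^sub>R (k s *v (f s - c i)))"
    if "s \<in> space ?L" for s
    using y that by (intro Delta_partition_piecewise[OF part]) auto
  show "integrable ?L (\<lambda>s. k s *v (f s - y s))"
  proof (subst Bochner_Integration.integrable_cong[OF refl pointwise])
    show "integrable ?L (\<lambda>s. \<Sum>i<N. indicator (P i) s *\<^sub>R (k s *v (f s - c i)))"
      using cells_int by (intro Bochner_Integration.integrable_sum) auto
  qed simp
  have "(\<integral>s. k s *v (f s - y s) \<partial>?L) = (\<integral>s. (\<Sum>i<N. indicator (P i) s *\<^sub>R (k s *v (f s - c i))) \<partial>?L)"
    by (rule Bochner_Integration.integral_cong[OF refl pointwise])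
  also have "\<dots> = (\<Sum>i<N. LINT s:P i|?L. k s *v (f s - c i))"
    unfolding set_lebesgue_integral_def using cells_int by (intro Bochner_Integration.integral_sum) auto
  finally show "(\<integral>s. k s *v (f s - y s) \<partial>?L) = (\<Sum>i<N. LINT s:P i|?L. k s *v (f s - c i))" .
qed

lemma kernel_row_discretization_le:
  fixes k :: "'k::euclidean_space \<Rightarrow> real^'n^'m" and x y :: "'k \<Rightarrow> real^'n" and c :: "nat \<Rightarrow> real^'n"
  assumes Om: "compact Om" and pq: "p > 1" "1 / p + 1 / q = 1" and \<gamma>: "\<gamma> > 0"
    and part: "Delta_partition Om D N P" and x: "x \<in> Lp_ball p Om r"
    and y: "\<And>i s. i < N \<Longrightarrow> s \<in> P i \<Longrightarrow> y s = c i"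
    and approx: "\<And>i. i < N \<Longrightarrow> norm (set_average (lebesgue_on Om) (P i) (truncation \<gamma> x) - c i) \<le> E"
    and k: "k \<in> borel_measurable (lebesgue_on Om)" "\<And>s. s \<in> Om \<Longrightarrow> norm (k s) \<le> K0" "K0 \<ge> 0"
    and modulus: "\<And>s t. s \<in> Om \<Longrightarrow> t \<in> Om \<Longrightarrow> norm (s - t) \<le> D \<Longrightarrow> norm (k s - k t) \<le> W"
    and W: "W \<ge> 0"
  shows "norm (\<integral>s. k s *v (x s - y s) \<partial>lebesgue_on Om)
    \<le> K0 * r powr p / \<gamma> powr (p - 1) + 2 * W * (measure lebesgue Om powr (1 / q) * r)
       + K0 * E * measure lebesgue Om"
proof -
  let ?L = "lebesgue_on Om"
  let ?xg = "truncation \<gamma> x"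
  have Om_meas: "Om \<in> lmeasurable" using Om by (rule lmeasurable_compact)
  have fin: "finite_measure ?L" using Om_meas by (rule finite_measure_lebesgue_on)
  have x_meas: "x \<in> borel_measurable ?L" using Lp_ballD(1)[OF x] pq by simp
  have xg: "?xg \<in> borel_measurable ?L" "\<And>s. norm (?xg s) \<le> \<gamma>"
    using x_meas \<gamma> by (auto simp: norm_truncation_le)
  have cell: "norm (LINT s:P i|?L. k s *v (?xg s - c i))
      \<le> 2 * W * (LINT s:P i|?L. norm (?xg s)) + K0 * E * measure ?L (P i)" if i: "i < N" for i
  proof (rule set_integral_cell_le[OF fin Delta_partition_sets_lebesgue_on[OF part i] _ _ xg(1) _ _ approx[OF i]])
    show "norm (k s - k t) \<le> W" if "s \<in> P i" "t \<in> P i" for s t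
      using Delta_partition_oscillation[OF compact_imp_bounded[OF Om] part _ i that, of k W] modulus
      by (simp add: dist_norm)
  qed (use k xg in auto)
  note tail = integral_truncation_tail_le[OF pq(1) \<gamma> x k]
  note cells = integral_step_function_split[OF part Om_meas k(1,2) xg y]
  have "(\<integral>s. k s *v (x s - y s) \<partial>?L) = (\<integral>s. k s *v (x s - ?xg s) + k s *v (?xg s - y s) \<partial>?L)"
    by (simp add: matrix_vector_right_distrib[symmetric])
  also have "\<dots> = (\<integral>s. k s *v (x s - ?xg s) \<partial>?L) + (\<Sum>i<N. LINT s:P i|?L. k s *v (?xg s - c i))"
    using Bochner_Integration.integral_add[OF tail(1) cells(1)] cells(2) by simp
  finally have split: "(\<integral>s. k s *v (x s - y s) \<partial>?L)
      = (\<integral>s. k s *v (x s - ?xg s) \<partial>?L) + (\<Sum>i<N. LINT s:P i|?L. k s *v (?xg s - c i))" .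
  have xg_int: "integrable ?L (\<lambda>s. norm (?xg s))"
    using xg by (intro finite_measure.integrable_const_bound[OF fin, where B=\<gamma>] AE_I2) auto
  note x_L1 = Lp_ball_integral_norm_le[OF Om_meas pq x]
  have "norm (\<Sum>i<N. LINT s:P i|?L. k s *v (?xg s - c i))
      \<le> (\<Sum>i<N. 2 * W * (LINT s:P i|?L. norm (?xg s)) + K0 * E * measure ?L (P i))"
    using cell by (intro order_trans[OF norm_sum] sum_mono) auto
  also have "\<dots> = 2 * W * (\<integral>s. norm (?xg s) \<partial>?L) + K0 * E * measure lebesgue Om"
    by (simp add: sum.distrib sum_distrib_left[symmetric] Delta_partition_sum_set_integral[OF part xg_int]
        Delta_partition_sum_measure[OF part Om_meas])
  also have "(\<integral>s. norm (?xg s) \<partial>?L) \<le> measure lebesgue Om powr (1 / q) * r"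
    using xg_int x_L1 by (intro order_trans[OF integral_mono x_L1(2)]) (auto simp: norm_truncation_le)
  finally have "norm (\<Sum>i<N. LINT s:P i|?L. k s *v (?xg s - c i))
      \<le> 2 * W * (measure lebesgue Om powr (1 / q) * r) + K0 * E * measure lebesgue Om"
    using W by (simp add: mult_left_mono)
  with tail(2) show ?thesis unfolding split by (smt (verit) norm_triangle_ineq)
qed

lemma Lp_ball_integrable_matrix_vector_mult:
  fixes k :: "'k::euclidean_space \<Rightarrow> real^'n^'m" and w :: "'k \<Rightarrow> real^'n"
  assumes Om: "Om \<in> lmeasurable" and pq: "p > 1" "1 / p + 1 / q = 1" and w: "w \<in> Lp_ball p Om r"
    and k: "k \<in> borel_measurable (lebesgue_on Om)"
    and d: "d \<in> borel_measurable (lebesgue_on Om)" "\<And>s. d s \<ge> 0" "integrable (lebesgue_on Om) (\<lambda>s. d s powr q)"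
    and bound: "\<And>s. s \<in> Om \<Longrightarrow> norm (k s) \<le> d s + K0"
  shows "integrable (lebesgue_on Om) (\<lambda>s. k s *v w s)"
proof (rule integrable_matrix_vector_mult_dominated[OF k])
  show "w \<in> borel_measurable (lebesgue_on Om)" using Lp_ballD(1)[OF w] pq by simp
  have "integrable (lebesgue_on Om) (\<lambda>s. norm (w s) * d s + K0 * norm (w s))"
    using Lp_ball_Holder(1)[OF pq w d] Lp_ball_integral_norm_le(1)[OF Om pq w] by simp
  then show "integrable (lebesgue_on Om) (\<lambda>s. (d s + K0) * norm (w s))"
    by (simp add: algebra_simps)
qed (use bound in simp)

lemma norm_integral_kernel_diff_le:
  fixes k kl :: "'k::euclidean_space \<Rightarrow> real^'n^'m" and x y :: "'k \<Rightarrow> real^'n"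
  assumes Om: "Om \<in> lmeasurable" and pq: "p > 1" "1 / p + 1 / q = 1"
    and x: "x \<in> Lp_ball p Om r" and y: "y \<in> Lp_ball p Om r"
    and k: "k \<in> borel_measurable (lebesgue_on Om)"
    and kl: "kl \<in> borel_measurable (lebesgue_on Om)" "\<And>s. s \<in> Om \<Longrightarrow> norm (kl s) \<le> K0"
    and defect: "(\<integral>\<^sup>+s. ennreal (norm (k s - kl s) powr q) \<partial>lebesgue_on Om) = ennreal G" and G: "G \<ge> 0"
  shows "norm ((\<integral>s. k s *v x s \<partial>lebesgue_on Om) - (\<integral>s. k s *v y s \<partial>lebesgue_on Om))
    \<le> 2 * r * G powr (1 / q) + norm (\<integral>s. kl s *v (x s - y s) \<partial>lebesgue_on Om)"
proof -
  let ?L = "lebesgue_on Om"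
  define d where "d s = norm (k s - kl s)" for s
  have d: "d \<in> borel_measurable ?L" "\<And>s. d s \<ge> 0" unfolding d_def[abs_def] using k kl(1) by auto
  have d_q: "(\<lambda>s. d s powr q) \<in> borel_measurable ?L" using d(1) by measurable
  have nn: "(\<integral>\<^sup>+s. ennreal (d s powr q) \<partial>?L) = ennreal G" using defect by (simp add: d_def)
  have d_int: "integrable ?L (\<lambda>s. d s powr q)"
    by (rule integrableI_nn_integral_finite[OF d_q _ nn]) simp
  have d_integral: "(\<integral>s. d s powr q \<partial>?L) = G"
    using integral_eq_nn_integral[OF d_q] nn G by simp
  have Holder: "integrable ?L (\<lambda>s. norm (w s) * d s)" "(\<integral>s. norm (w s) * d s \<partial>?L) \<le> r * G powr (1 / q)"
    if "w \<in> Lp_ball p Om r" for w :: "'k \<Rightarrow> real^'n"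
    using Lp_ball_Holder[OF pq that d d_int] by (simp_all add: d_integral)
  have integrable: "integrable ?L (\<lambda>s. k s *v w s)" "integrable ?L (\<lambda>s. kl s *v w s)"
    if w: "w \<in> Lp_ball p Om r" for w :: "'k \<Rightarrow> real^'n"
  proof -
    show "integrable ?L (\<lambda>s. k s *v w s)"
    proof (rule Lp_ball_integrable_matrix_vector_mult[OF Om pq w k d d_int])
      show "norm (k s) \<le> d s + K0" if "s \<in> Om" for s
        using norm_triangle_ineq[of "k s - kl s" "kl s"] kl(2)[OF that] by (simp add: d_def)
    qed
    show "integrable ?L (\<lambda>s. kl s *v w s)"
      using kl(2) by (intro Lp_ball_integrable_matrix_vector_mult[OF Om pq w kl(1), of "\<lambda>_. 0"]) auto
  qed
  have split_pointwise: "k s *v x s - k s *v y s = (k s - kl s) *v (x s - y s) + kl s *v (x s - y s)" for s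
    using matrix_vector_mult_add_rdistrib[of "k s - kl s" "kl s" "x s - y s"]
    by (simp add: matrix_vector_mult_diff_distrib)
  have int_kl: "integrable ?L (\<lambda>s. kl s *v (x s - y s))"
    using integrable(2)[OF x] integrable(2)[OF y] by (simp add: matrix_vector_mult_diff_distrib)
  have "(\<lambda>s. (k s - kl s) *v (x s - y s)) = (\<lambda>s. (k s *v x s - k s *v y s) - kl s *v (x s - y s))"
    using split_pointwise by (simp add: fun_eq_iff eq_diff_eq)
  then have int_defect: "integrable ?L (\<lambda>s. (k s - kl s) *v (x s - y s))"
    using Bochner_Integration.integrable_diff[OF integrable(1)[OF x] integrable(1)[OF y]] int_kl by simp
  have "(\<integral>s. k s *v x s \<partial>?L) - (\<integral>s. k s *v y s \<partial>?L)
      = (\<integral>s. (k s - kl s) *v (x s - y s) + kl s *v (x s - y s) \<partial>?L)"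
    using Bochner_Integration.integral_diff[OF integrable(1)[OF x] integrable(1)[OF y]] split_pointwise
    by simp
  also have "\<dots> = (\<integral>s. (k s - kl s) *v (x s - y s) \<partial>?L) + (\<integral>s. kl s *v (x s - y s) \<partial>?L)"
    using int_defect int_kl by (rule Bochner_Integration.integral_add)
  finally have split: "(\<integral>s. k s *v x s \<partial>?L) - (\<integral>s. k s *v y s \<partial>?L)
      = (\<integral>s. (k s - kl s) *v (x s - y s) \<partial>?L) + (\<integral>s. kl s *v (x s - y s) \<partial>?L)" .
  have "norm (\<integral>s. (k s - kl s) *v (x s - y s) \<partial>?L) \<le> (\<integral>s. norm (x s) * d s + norm (y s) * d s \<partial>?L)"
  proof (rule Bochner_Integration.integral_norm_bound_integral[OF int_defect])
    show "integrable ?L (\<lambda>s. norm (x s) * d s + norm (y s) * d s)"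
      using Holder(1)[OF x] Holder(1)[OF y] by simp
    fix s
    have "norm ((k s - kl s) *v (x s - y s)) \<le> d s * (norm (x s) + norm (y s))"
      unfolding d_def by (intro order_trans[OF norm_matrix_vector_mult_le] mult_left_mono norm_triangle_ineq4) simp
    then show "norm ((k s - kl s) *v (x s - y s)) \<le> norm (x s) * d s + norm (y s) * d s"
      by (simp add: algebra_simps)
  qed
  also have "\<dots> \<le> 2 * r * G powr (1 / q)"
    using Holder[OF x] Holder[OF y] by (simp add: Bochner_Integration.integral_add)
  finally show ?thesis unfolding split by (smt (verit) norm_triangle_ineq)
qed

section \<open>The discretised ball\<close>

lemma uniform_grid_floor:
  fixes t \<gamma> :: real
  assumes \<gamma>: "\<gamma> > 0" and a: "a \<ge> 1" and t: "0 \<le> t" "t \<le> \<gamma>"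
  obtains j :: nat where "j \<le> a" "real j * \<gamma> / real a \<le> t" "t - real j * \<gamma> / real a \<le> \<gamma> / real a"
proof
  define u where "u = t * real a / \<gamma>"
  have u: "0 \<le> u" "u \<le> real a" "t = u * \<gamma> / real a" using \<gamma> a t by (auto simp: u_def field_simps)
  have j: "real (nat \<lfloor>u\<rfloor>) = of_int \<lfloor>u\<rfloor>" using u by simp
  show "nat \<lfloor>u\<rfloor> \<le> a" using u(2) by linarith
  show "real (nat \<lfloor>u\<rfloor>) * \<gamma> / real a \<le> t"
    unfolding j u(3) using \<gamma> a by (intro divide_right_mono mult_right_mono) auto
  have "t - real (nat \<lfloor>u\<rfloor>) * \<gamma> / real a = (u - of_int \<lfloor>u\<rfloor>) * \<gamma> / real a"
    unfolding j u(3) by (simp add: diff_divide_distrib left_diff_distrib)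
  also have "\<dots> \<le> 1 * \<gamma> / real a"
    using \<gamma> a by (intro divide_right_mono mult_right_mono) linarith+
  finally show "t - real (nat \<lfloor>u\<rfloor>) * \<gamma> / real a \<le> \<gamma> / real a" by simp
qed

lemma sigma_net_grid_approx:
  fixes v :: "'a::euclidean_space"
  assumes net: "sigma_net (sphere 0 1) sg Es" and \<gamma>: "\<gamma> > 0" and a: "a \<ge> 1" and v: "norm v \<le> \<gamma>"
  obtains j l where "j \<le> a" "l \<in> Es" "real j * \<gamma> / real a \<le> norm v"
    "norm (v - (real j * \<gamma> / real a) *\<^sub>R l) \<le> \<gamma> / real a + \<gamma> * sg"
proof -
  obtain u where u: "norm u = 1" "v = norm v *\<^sub>R u"
  proof (cases "v = 0")
    case True
    obtain e :: 'a where "norm e = 1" using vector_choose_size[of 1] by auto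
    with True show ?thesis using that by auto
  next
    case False
    then show ?thesis using that[of "v /\<^sub>R norm v"] by simp
  qed
  have "u \<in> sphere 0 1" using u(1) by simp
  then obtain l where l: "l \<in> Es" "dist u l \<le> sg" using net unfolding sigma_net_def by blast
  have sg: "sg \<ge> 0" using l(2) zero_le_dist order_trans by blast
  obtain j where j: "j \<le> a" "real j * \<gamma> / real a \<le> norm v" "norm v - real j * \<gamma> / real a \<le> \<gamma> / real a"
    using uniform_grid_floor[OF \<gamma> a norm_ge_zero v] .
  define z where "z = real j * \<gamma> / real a"
  have z: "0 \<le> z" "z \<le> \<gamma>" using \<gamma> j(2) v by (auto simp: z_def)
  have "v - z *\<^sub>R l = (norm v - z) *\<^sub>R u + z *\<^sub>R (u - l)"
    by (subst u(2)) (simp add: algebra_simps)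
  then have "norm (v - z *\<^sub>R l) \<le> (norm v - z) + z * dist u l"
    using norm_triangle_ineq[of "(norm v - z) *\<^sub>R u" "z *\<^sub>R (u - l)"] u(1) z j(2)
    by (simp add: dist_norm z_def)
  also have "\<dots> \<le> \<gamma> / real a + \<gamma> * sg"
    using j(3) mult_mono[OF z(2) l(2) \<gamma>[THEN less_imp_le] zero_le_dist] by (simp add: z_def)
  finally show ?thesis using that j l(1) by (simp add: z_def)
qed

lemma disc_ball_subset_Lp_ball:
  assumes Om: "Om \<in> lmeasurable" and p: "p > 0" and r: "r \<ge> 0" and \<gamma>: "\<gamma> \<ge> 0"
    and part: "Delta_partition Om D N P" and net: "Es \<subseteq> sphere 0 1"
  shows "disc_ball p Om r N P \<gamma> a Es \<subseteq> Lp_ball p Om r"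
proof
  fix y assume "y \<in> disc_ball p Om r N P \<gamma> a Es"
  then obtain j l where jl: "\<And>i. i < N \<Longrightarrow> l i \<in> Es \<and> (\<forall>s\<in>P i. y s = (real (j i) * \<gamma> / real a) *\<^sub>R l i)"
    and sum: "(\<Sum>i<N. measure lebesgue (P i) * (real (j i) * \<gamma> / real a) powr p) \<le> r powr p"
    unfolding disc_ball_def by blast
  let ?L = "lebesgue_on Om"
  define z where "z i = real (j i) * \<gamma> / real a" for i
  interpret finite_measure ?L using Om by (rule finite_measure_lebesgue_on)
  have cells: "P i \<in> sets ?L" if "i < N" for i using part that by (rule Delta_partition_sets_lebesgue_on)
  have l_norm: "norm (l i) = 1" if "i < N" for i using jl[OF that] net by auto
  have norm_y: "norm (y s) powr p = (\<Sum>i<N. indicator (P i) s *\<^sub>R z i powr p)" if "s \<in> Om" for s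
    using jl l_norm \<gamma> by (intro Delta_partition_piecewise[OF part that]) (auto simp: z_def)
  have y_int: "integrable ?L (\<lambda>s. norm (y s) powr p)"
  proof (subst Bochner_Integration.integrable_cong[OF refl norm_y])
    show "integrable ?L (\<lambda>s. \<Sum>i<N. indicator (P i) s *\<^sub>R z i powr p)"
      using cells by (intro Bochner_Integration.integrable_sum integrable_mult_indicator) auto
  qed simp
  have y_meas: "y \<in> borel_measurable ?L"
  proof (rule measurable_cong[THEN iffD1])
    show "(\<lambda>s. \<Sum>i<N. indicator (P i) s *\<^sub>R (real (j i) * \<gamma> / real a) *\<^sub>R l i) \<in> borel_measurable ?L"
      using cells by (intro borel_measurable_sum borel_measurable_scaleR) auto
    show "(\<Sum>i<N. indicator (P i) s *\<^sub>R (real (j i) * \<gamma> / real a) *\<^sub>R l i) = y s" if "s \<in> space ?L" for s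
      using jl that by (intro Delta_partition_piecewise[OF part, symmetric]) auto
  qed
  have "(\<integral>s. norm (y s) powr p \<partial>?L) = (\<Sum>i<N. measure lebesgue (P i) * z i powr p)"
  proof -
    have "(\<integral>s. norm (y s) powr p \<partial>?L) = (\<Sum>i<N. LINT s:P i|?L. norm (y s) powr p)"
      by (rule Delta_partition_sum_set_integral[OF part y_int, symmetric])
    also have "\<dots> = (\<Sum>i<N. LINT s:P i|?L. z i powr p)"
      using jl l_norm \<gamma> unfolding set_lebesgue_integral_def
      by (intro sum.cong Bochner_Integration.integral_cong) (auto simp: indicator_def z_def)
    also have "\<dots> = (\<Sum>i<N. measure lebesgue (P i) * z i powr p)"
      using cells emeasure_finite Delta_partition_measure[OF part]
      by (intro sum.cong) (auto simp: set_integral_const top_unique)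
    finally show ?thesis .
  qed
  also have "\<dots> \<le> r powr p" using sum p by (simp add: z_def)
  finally have "Lp_norm p Om y \<le> (r powr p) powr (1 / p)"
    unfolding Lp_norm_def using p by (intro powr_mono2) (auto intro: integral_nonneg_AE)
  also have "\<dots> = r" using r p by (simp add: powr_powr)
  finally show "y \<in> Lp_ball p Om r"
    unfolding Lp_ball_def Lp_space_def using y_meas y_int by auto
qed

lemma disc_ball_approx:
  fixes x :: "'k::euclidean_space \<Rightarrow> real^'n"
  assumes Om: "Om \<in> lmeasurable" and p: "p > 1" and \<gamma>: "\<gamma> > 0" and a: "a \<ge> 1"
    and part: "Delta_partition Om D N P" and net: "sigma_net (sphere 0 1) sg Es"
    and x: "x \<in> Lp_ball p Om r"
  obtains y c where "y \<in> disc_ball p Om r N P \<gamma> a Es"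
    and "\<And>i s. i < N \<Longrightarrow> s \<in> P i \<Longrightarrow> y s = c i"
    and "\<And>i. i < N \<Longrightarrow> norm (set_average (lebesgue_on Om) (P i) (truncation \<gamma> x) - c i) \<le> \<gamma> / real a + \<gamma> * sg"
proof -
  let ?L = "lebesgue_on Om"
  let ?xg = "truncation \<gamma> x"
  define v where "v i = set_average ?L (P i) ?xg" for i
  have fin: "finite_measure ?L" using Om by (rule finite_measure_lebesgue_on)
  have cells: "P i \<in> sets ?L" if "i < N" for i using part that by (rule Delta_partition_sets_lebesgue_on)
  have x_meas: "x \<in> borel_measurable ?L" and x_int: "integrable ?L (\<lambda>s. norm (x s) powr p)"
    and x_le: "(\<integral>s. norm (x s) powr p \<partial>?L) \<le> r powr p"
    using Lp_ballD[OF x] p by auto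
  have v: "norm (v i) \<le> \<gamma>" if "i < N" for i
    unfolding v_def using x_meas \<gamma>
    by (intro norm_set_average_le_bound[OF fin cells[OF that]]) (auto simp: norm_truncation_le)
  have "\<forall>i. \<exists>j l. i < N \<longrightarrow> j \<le> a \<and> l \<in> Es \<and> real j * \<gamma> / real a \<le> norm (v i) \<and>
      norm (v i - (real j * \<gamma> / real a) *\<^sub>R l) \<le> \<gamma> / real a + \<gamma> * sg"
    using sigma_net_grid_approx[OF net \<gamma> a v] by metis
  then obtain j l where jl: "\<And>i. i < N \<Longrightarrow> j i \<le> a \<and> l i \<in> Es \<and> real (j i) * \<gamma> / real a \<le> norm (v i) \<and>
      norm (v i - (real (j i) * \<gamma> / real a) *\<^sub>R l i) \<le> \<gamma> / real a + \<gamma> * sg"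
    by metis
  define c where "c i = (real (j i) * \<gamma> / real a) *\<^sub>R l i" for i
  define y where "y s = (if s \<in> Om then \<Sum>i<N. indicator (P i) s *\<^sub>R c i else 0)" for s
  have y: "y s = c i" if "i < N" "s \<in> P i" for i s
    using that Delta_partitionD(2)[OF part that(1)] Delta_partition_sum_indicator_scaleR[OF part that]
    by (auto simp: y_def)
  have "(\<Sum>i<N. measure lebesgue (P i) * (real (j i) * \<gamma> / real a) powr p)
      \<le> (\<Sum>i<N. LINT s:P i|?L. norm (x s) powr p)"
  proof (rule sum_mono)
    fix i assume "i \<in> {..<N}"
    then have i: "i < N" by simp
    have "measure lebesgue (P i) * (real (j i) * \<gamma> / real a) powr p \<le> measure ?L (P i) * norm (v i) powr p"
      unfolding Delta_partition_measure[OF part i]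
      using jl[OF i] \<gamma> p by (intro mult_left_mono powr_mono2) auto
    also have "\<dots> \<le> (LINT s:P i|?L. norm (x s) powr p)"
      unfolding v_def by (rule set_average_truncation_powr_le[OF fin cells[OF i] p \<gamma> x_meas x_int])
    finally show "measure lebesgue (P i) * (real (j i) * \<gamma> / real a) powr p \<le> (LINT s:P i|?L. norm (x s) powr p)" .
  qed
  also have "\<dots> \<le> r powr p"
    using Delta_partition_sum_set_integral[OF part x_int] x_le by simp
  finally have sum_le: "(\<Sum>i<N. measure lebesgue (P i) * (real (j i) * \<gamma> / real a) powr p) \<le> r powr p" .
  have "y \<in> disc_ball p Om r N P \<gamma> a Es"
    unfolding disc_ball_def mem_Collect_eq
  proof (intro conjI exI[of _ j] exI[of _ l] allI impI ballI sum_le)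
    show "y s = 0" if "s \<notin> Om" for s using that by (simp add: y_def)
    show "y s = (real (j i) * \<gamma> / real a) *\<^sub>R l i" if "i < N" "s \<in> P i" for i s
      using y[OF that] by (simp add: c_def)
  qed (use jl in auto)
  then show thesis
  proof (rule that[OF _ y])
    show "norm (set_average ?L (P i) ?xg - c i) \<le> \<gamma> / real a + \<gamma> * sg" if "i < N" for i
      using jl[OF that] by (simp add: v_def c_def)
  qed
qed

section \<open>Kernels on the product\<close>

lemma bdd_above_kernel_norms:
  fixes Kl :: "'k::euclidean_space \<Rightarrow> 'k \<Rightarrow> real^'n^'m"
  assumes "compact Om" "continuous_on (Om \<times> Om) (\<lambda>(\<xi>, s). Kl \<xi> s)"
  shows "bdd_above ((\<lambda>(\<xi>, s). norm (Kl \<xi> s)) ` (Om \<times> Om))"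
proof -
  have "continuous_on (Om \<times> Om) (\<lambda>z. norm ((\<lambda>(\<xi>, s). Kl \<xi> s) z))"
    using assms(2) by (rule continuous_on_norm)
  then have "compact ((\<lambda>(\<xi>, s). norm (Kl \<xi> s)) ` (Om \<times> Om))"
    using assms(1) by (intro compact_continuous_image compact_Times) (auto simp: case_prod_unfold)
  then show ?thesis by (intro bounded_imp_bdd_above compact_imp_bounded)
qed

lemma norm_le_kernel_max:
  assumes "compact Om" "continuous_on (Om \<times> Om) (\<lambda>(\<xi>, s). Kl \<xi> s)" "\<xi> \<in> Om" "s \<in> Om"
  shows "norm (Kl \<xi> s) \<le> kernel_max Om Kl"
  unfolding kernel_max_def using assms by (intro cSup_upper bdd_above_kernel_norms) auto

lemma kernel_max_nonneg:
  assumes "compact Om" "Om \<noteq> {}" "continuous_on (Om \<times> Om) (\<lambda>(\<xi>, s). Kl \<xi> s)"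
  shows "kernel_max Om Kl \<ge> 0"
proof -
  obtain s where "s \<in> Om" using assms(2) by blast
  then show ?thesis using norm_le_kernel_max[OF assms(1,3)] norm_ge_zero order_trans by blast
qed

lemma norm_diff_le_kernel_modulus:
  assumes Om: "compact Om" and cont: "continuous_on (Om \<times> Om) (\<lambda>(\<xi>, s). Kl \<xi> s)"
    and "\<xi> \<in> Om" "s1 \<in> Om" "s2 \<in> Om" "norm (s2 - s1) \<le> D"
  shows "norm (Kl \<xi> s2 - Kl \<xi> s1) \<le> kernel_modulus Om Kl D"
  unfolding kernel_modulus_def
proof (rule cSup_upper)
  show "bdd_above {norm (Kl \<xi> s2 - Kl \<xi> s1) |\<xi> s1 s2. \<xi> \<in> Om \<and> s1 \<in> Om \<and> s2 \<in> Om \<and> norm (s2 - s1) \<le> D}"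
  proof (rule bdd_aboveI, safe)
    fix \<xi> s1 s2 assume "\<xi> \<in> Om" "s1 \<in> Om" "s2 \<in> Om"
    then show "norm (Kl \<xi> s2 - Kl \<xi> s1) \<le> 2 * kernel_max Om Kl"
      using norm_triangle_ineq4[of "Kl \<xi> s2" "Kl \<xi> s1"]
        norm_le_kernel_max[OF Om cont, of \<xi> s1] norm_le_kernel_max[OF Om cont, of \<xi> s2] by linarith
  qed
qed (use assms in blast)

lemma kernel_modulus_nonneg:
  assumes "compact Om" "Om \<noteq> {}" "continuous_on (Om \<times> Om) (\<lambda>(\<xi>, s). Kl \<xi> s)" "D \<ge> 0"
  shows "kernel_modulus Om Kl D \<ge> 0"
proof -
  obtain s where "s \<in> Om" using assms(2) by blast
  then show ?thesis using norm_diff_le_kernel_modulus[OF assms(1,3), of s s s D] assms(4) by simp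
qed

lemma borel_measurable_kernel_row:
  fixes Kl :: "'k::euclidean_space \<Rightarrow> 'k \<Rightarrow> 'b::euclidean_space"
  assumes "Om \<in> sets lebesgue" "continuous_on (Om \<times> Om) (\<lambda>(\<xi>, s). Kl \<xi> s)" "\<xi> \<in> Om"
  shows "(\<lambda>s. Kl \<xi> s) \<in> borel_measurable (lebesgue_on Om)"
proof -
  have "continuous_on Om (\<lambda>s. (\<lambda>(\<xi>, s). Kl \<xi> s) (\<xi>, s))"
    using assms(3) by (intro continuous_on_compose2[OF assms(2)] continuous_intros) auto
  then show ?thesis using assms(1) by (simp add: continuous_imp_measurable_on_sets_lebesgue)
qed

lemma AE_lebesgue_on_of_AE_lborel:
  assumes "AE \<xi> in lborel. \<xi> \<in> Om \<longrightarrow> P \<xi>" "Om \<in> sets lebesgue"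
  shows "AE \<xi> in lebesgue_on Om. P \<xi>"
  using AE_completion[OF assms(1)] assms(2) by (simp add: AE_restrict_space_iff)

lemma borel_measurable_lebesgue_AE_eq_borel:
  fixes f :: "'a::euclidean_space \<Rightarrow> 'b::euclidean_space"
  assumes "f \<in> borel_measurable lebesgue"
  obtains g where "g \<in> borel_measurable lborel" "AE x in lborel. f x = g x"
proof -
  have "\<forall>b\<in>Basis. \<exists>g\<in>borel_measurable lborel. AE x in lborel. f x \<bullet> b = g x"
  proof
    fix b :: 'b
    have "(\<lambda>x. f x \<bullet> b) \<in> borel_measurable (completion lborel)" using assms by measurable
    then show "\<exists>g\<in>borel_measurable lborel. AE x in lborel. f x \<bullet> b = g x"
      by (rule completion_ex_borel_measurable_real)
  qed
  then obtain g where g: "\<And>b. b \<in> Basis \<Longrightarrow> g b \<in> borel_measurable lborel"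
    "\<And>b. b \<in> Basis \<Longrightarrow> AE x in lborel. f x \<bullet> b = g b x"
    by metis
  show thesis
  proof
    show "(\<lambda>x. \<Sum>b\<in>Basis. g b x *\<^sub>R b) \<in> borel_measurable lborel"
      using g(1) by (intro borel_measurable_sum borel_measurable_scaleR) auto
    have "AE x in lborel. \<forall>b\<in>Basis. f x \<bullet> b = g b x"
      using g(2) by (simp add: eventually_ball_finite_distrib)
    then show "AE x in lborel. f x = (\<Sum>b\<in>Basis. g b x *\<^sub>R b)"
    proof (rule AE_mp, intro AE_I2 impI)
      fix x assume "\<forall>b\<in>Basis. f x \<bullet> b = g b x"
      then show "f x = (\<Sum>b\<in>Basis. g b x *\<^sub>R b)"
        by (metis (no_types, lifting) euclidean_representation sum.cong)
    qed
  qed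
qed

lemma borel_measurable_sections_lebesgue_on:
  fixes K :: "'a::euclidean_space \<Rightarrow> 'a \<Rightarrow> 'b::euclidean_space"
  assumes Om: "closed Om"
    and K: "(\<lambda>(\<xi>, s). K \<xi> s) \<in> borel_measurable (lebesgue_on (Om \<times> Om))"
  shows "AE \<xi> in lebesgue_on Om. (\<lambda>s. K \<xi> s) \<in> borel_measurable (lebesgue_on Om)"
proof -
  have "closed (Om \<times> Om)" using Om Om by (rule closed_Times)
  then have OO: "Om \<times> Om \<in> sets lebesgue" by (simp add: borel_closed)
  define f where "f z = indicator (Om \<times> Om) z *\<^sub>R K (fst z) (snd z)" for z
  have "f \<in> borel_measurable lebesgue"
    using K OO unfolding f_def
    by (subst (asm) borel_measurable_restrict_space_iff) (auto simp: case_prod_unfold)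
  \<comment> \<open>Sections are taken of a Borel representative, for which the product structure
    \<open>lborel \<Otimes>\<^sub>M lborel = lborel\<close> is available.\<close>
  then obtain g where g: "g \<in> borel_measurable (lborel \<Otimes>\<^sub>M lborel)"
    and fg: "AE z in lborel \<Otimes>\<^sub>M lborel. f z = g z"
    unfolding lborel_prod by (rule borel_measurable_lebesgue_AE_eq_borel)
  have "AE \<xi> in lborel. AE s in lborel. f (\<xi>, s) = g (\<xi>, s)"
    using fg by (rule lborel_pair.AE_pair)
  then have "AE \<xi> in lborel. \<xi> \<in> Om \<longrightarrow> (\<lambda>s. K \<xi> s) \<in> borel_measurable (lebesgue_on Om)"
  proof (rule AE_mp, intro AE_I2 impI)
    fix \<xi> assume ae: "AE s in lborel. f (\<xi>, s) = g (\<xi>, s)" and \<xi>: "\<xi> \<in> Om"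
    have "(\<lambda>s. g (\<xi>, s)) \<in> borel_measurable lebesgue"
      using measurable_Pair2[OF g] by (intro measurable_completion) simp
    moreover have "AE s in lebesgue. g (\<xi>, s) = f (\<xi>, s)"
      using ae by (intro AE_completion) auto
    ultimately have "(\<lambda>s. f (\<xi>, s)) \<in> borel_measurable lebesgue"
      by (rule borel_measurable_AE)
    then have "(\<lambda>s. f (\<xi>, s)) \<in> borel_measurable (lebesgue_on Om)"
      by (rule measurable_restrict_space1)
    then show "(\<lambda>s. K \<xi> s) \<in> borel_measurable (lebesgue_on Om)"
      by (rule measurable_cong[THEN iffD1, rotated]) (auto simp: f_def \<xi>)
  qed
  then show ?thesis using Om by (intro AE_lebesgue_on_of_AE_lborel) (simp_all add: borel_closed)
qed

lemma nn_integral_lebesgue_on_le_lborel: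
  assumes "Om \<in> sets lebesgue"
  shows "(\<integral>\<^sup>+\<xi>. g \<xi> \<partial>lebesgue_on Om) \<le> (\<integral>\<^sup>+\<xi>. g \<xi> \<partial>lborel)"
proof -
  have "(\<integral>\<^sup>+\<xi>. g \<xi> \<partial>lebesgue_on Om) = (\<integral>\<^sup>+\<xi>. g \<xi> * indicator Om \<xi> \<partial>lborel)"
    using assms by (simp add: nn_integral_restrict_space nn_integral_completion)
  also have "\<dots> \<le> (\<integral>\<^sup>+\<xi>. g \<xi> \<partial>lborel)"
    by (intro nn_integral_mono) (auto simp: indicator_def)
  finally show ?thesis .
qed

lemma nn_integral_sections_lborel:
  fixes G :: "'a::euclidean_space \<Rightarrow> 'a \<Rightarrow> real"
  assumes Om: "closed Om"
    and G: "(\<lambda>(\<xi>, s). G \<xi> s) \<in> borel_measurable (lebesgue_on (Om \<times> Om))"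
      "integrable (lebesgue_on (Om \<times> Om)) (\<lambda>(\<xi>, s). G \<xi> s)" "\<And>\<xi> s. G \<xi> s \<ge> 0"
  obtains k where "k \<in> borel_measurable lborel"
    and "AE \<xi> in lborel. \<xi> \<in> Om \<longrightarrow> (\<integral>\<^sup>+s. ennreal (G \<xi> s) \<partial>lebesgue_on Om) = k \<xi>"
    and "(\<integral>\<^sup>+\<xi>. k \<xi> \<partial>lborel) = ennreal (\<integral>z. (\<lambda>(\<xi>, s). G \<xi> s) z \<partial>lebesgue_on (Om \<times> Om))"
proof -
  have "closed (Om \<times> Om)" using Om Om by (rule closed_Times)
  then have OO: "Om \<times> Om \<in> sets lebesgue" by (simp add: borel_closed)
  have Om_sets: "Om \<in> sets lebesgue" using Om by (simp add: borel_closed)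
  define F where "F z = ennreal (indicator (Om \<times> Om) z *\<^sub>R G (fst z) (snd z))" for z
  have "(\<lambda>z. indicator (Om \<times> Om) z *\<^sub>R G (fst z) (snd z)) \<in> borel_measurable lebesgue"
    using G(1) OO by (subst (asm) borel_measurable_restrict_space_iff) (auto simp: case_prod_unfold)
  then have "F \<in> borel_measurable (completion lborel)" unfolding F_def by measurable
  then obtain g where g: "g \<in> borel_measurable (lborel \<Otimes>\<^sub>M lborel)"
    and Fg: "AE z in lborel \<Otimes>\<^sub>M lborel. F z = g z"
    unfolding lborel_prod using completion_ex_borel_measurable by blast
  define k where "k \<xi> = (\<integral>\<^sup>+s. g (\<xi>, s) \<partial>lborel)" for \<xi>
  show thesis
  proof
    show "k \<in> borel_measurable lborel"
      unfolding k_def using lborel.borel_measurable_nn_integral_fst[OF g] by simp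
    have "AE \<xi> in lborel. AE s in lborel. F (\<xi>, s) = g (\<xi>, s)"
      using Fg by (rule lborel_pair.AE_pair)
    then show "AE \<xi> in lborel. \<xi> \<in> Om \<longrightarrow> (\<integral>\<^sup>+s. ennreal (G \<xi> s) \<partial>lebesgue_on Om) = k \<xi>"
    proof (rule AE_mp, intro AE_I2 impI)
      fix \<xi> assume ae: "AE s in lborel. F (\<xi>, s) = g (\<xi>, s)" and \<xi>: "\<xi> \<in> Om"
      have "(\<integral>\<^sup>+s. ennreal (G \<xi> s) \<partial>lebesgue_on Om) = (\<integral>\<^sup>+s. ennreal (G \<xi> s) * indicator Om s \<partial>lebesgue)"
        using Om_sets by (simp add: nn_integral_restrict_space)
      also have "\<dots> = (\<integral>\<^sup>+s. F (\<xi>, s) \<partial>lebesgue)"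
        by (rule nn_integral_cong) (auto simp: F_def indicator_def \<xi>)
      also have "\<dots> = k \<xi>"
        unfolding k_def nn_integral_completion using ae by (rule nn_integral_cong_AE)
      finally show "(\<integral>\<^sup>+s. ennreal (G \<xi> s) \<partial>lebesgue_on Om) = k \<xi>" .
    qed
    have "(\<integral>\<^sup>+\<xi>. k \<xi> \<partial>lborel) = integral\<^sup>N (lborel \<Otimes>\<^sub>M lborel) F"
      unfolding k_def lborel.nn_integral_fst[OF g] using Fg by (intro nn_integral_cong_AE) (auto elim: AE_mp)
    also have "\<dots> = integral\<^sup>N lebesgue F"
      by (simp add: lborel_prod nn_integral_completion)
    also have "\<dots> = (\<integral>\<^sup>+z. ennreal ((\<lambda>(\<xi>, s). G \<xi> s) z) * indicator (Om \<times> Om) z \<partial>lebesgue)"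
      by (rule nn_integral_cong) (auto simp: F_def indicator_def case_prod_unfold)
    also have "\<dots> = (\<integral>\<^sup>+z. ennreal ((\<lambda>(\<xi>, s). G \<xi> s) z) \<partial>lebesgue_on (Om \<times> Om))"
      using OO by (simp add: nn_integral_restrict_space)
    also have "\<dots> = ennreal (\<integral>z. (\<lambda>(\<xi>, s). G \<xi> s) z \<partial>lebesgue_on (Om \<times> Om))"
      using G(2,3) by (intro nn_integral_eq_integral) auto
    finally show "(\<integral>\<^sup>+\<xi>. k \<xi> \<partial>lborel) = ennreal (\<integral>z. (\<lambda>(\<xi>, s). G \<xi> s) z \<partial>lebesgue_on (Om \<times> Om))" .
  qed
qed

lemma integral_sections_lebesgue_on:
  fixes G :: "'a::euclidean_space \<Rightarrow> 'a \<Rightarrow> real"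
  assumes Om: "closed Om"
    and G: "(\<lambda>(\<xi>, s). G \<xi> s) \<in> borel_measurable (lebesgue_on (Om \<times> Om))"
      "integrable (lebesgue_on (Om \<times> Om)) (\<lambda>(\<xi>, s). G \<xi> s)" "\<And>\<xi> s. G \<xi> s \<ge> 0"
  obtains g where "g \<in> borel_measurable (lebesgue_on Om)" and "\<And>\<xi>. g \<xi> \<ge> 0"
    and "integrable (lebesgue_on Om) g"
    and "(\<integral>\<xi>. g \<xi> \<partial>lebesgue_on Om) \<le> (\<integral>z. (\<lambda>(\<xi>, s). G \<xi> s) z \<partial>lebesgue_on (Om \<times> Om))"
    and "AE \<xi> in lebesgue_on Om. (\<integral>\<^sup>+s. ennreal (G \<xi> s) \<partial>lebesgue_on Om) = ennreal (g \<xi>)"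
proof -
  let ?L = "lebesgue_on Om"
  let ?I = "\<integral>z. (\<lambda>(\<xi>, s). G \<xi> s) z \<partial>lebesgue_on (Om \<times> Om)"
  have Om_sets: "Om \<in> sets lebesgue" using Om by (simp add: borel_closed)
  obtain k where k: "k \<in> borel_measurable lborel"
    and sections: "AE \<xi> in lborel. \<xi> \<in> Om \<longrightarrow> (\<integral>\<^sup>+s. ennreal (G \<xi> s) \<partial>?L) = k \<xi>"
    and k_int: "(\<integral>\<^sup>+\<xi>. k \<xi> \<partial>lborel) = ennreal ?I"
    by (rule nn_integral_sections_lborel[OF Om G])
  have k_fin: "AE \<xi> in lborel. k \<xi> \<noteq> \<infinity>"
    using k k_int by (intro nn_integral_PInf_AE) auto
  have k_L: "k \<in> borel_measurable ?L"
    using k by (intro measurable_restrict_space1 measurable_completion)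
  define g where "g \<xi> = enn2real (k \<xi>)" for \<xi>
  have g_meas: "g \<in> borel_measurable ?L" unfolding g_def using k_L by measurable
  have g_nn: "(\<integral>\<^sup>+\<xi>. ennreal (g \<xi>) \<partial>?L) \<le> ennreal ?I"
  proof -
    have "(\<integral>\<^sup>+\<xi>. ennreal (g \<xi>) \<partial>?L) \<le> (\<integral>\<^sup>+\<xi>. k \<xi> \<partial>?L)"
      by (intro nn_integral_mono) (simp add: g_def ennreal_enn2real_if)
    also have "\<dots> \<le> (\<integral>\<^sup>+\<xi>. k \<xi> \<partial>lborel)" by (rule nn_integral_lebesgue_on_le_lborel[OF Om_sets])
    finally show ?thesis using k_int by simp
  qed
  show thesis
  proof
    show "g \<in> borel_measurable ?L" by (rule g_meas)
    show "g \<xi> \<ge> 0" for \<xi> by (simp add: g_def)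
    show g_int: "integrable ?L g"
      using g_meas order.strict_trans1[OF g_nn ennreal_less_top]
      by (intro integrableI_bounded) (simp_all add: g_def)
    have "(\<integral>\<xi>. g \<xi> \<partial>?L) = enn2real (\<integral>\<^sup>+\<xi>. ennreal (g \<xi>) \<partial>?L)"
      by (intro integral_eq_nn_integral g_meas AE_I2) (simp add: g_def)
    also have "\<dots> \<le> enn2real (ennreal ?I)"
      by (rule enn2real_mono[OF g_nn]) simp
    also have "\<dots> = ?I"
      using G(3) by (simp add: integral_nonneg_AE case_prod_unfold)
    finally show "(\<integral>\<xi>. g \<xi> \<partial>?L) \<le> ?I" .
    show "AE \<xi> in ?L. (\<integral>\<^sup>+s. ennreal (G \<xi> s) \<partial>?L) = ennreal (g \<xi>)"
    proof (rule AE_lebesgue_on_of_AE_lborel[OF _ Om_sets])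
      show "AE \<xi> in lborel. \<xi> \<in> Om \<longrightarrow> (\<integral>\<^sup>+s. ennreal (G \<xi> s) \<partial>?L) = ennreal (g \<xi>)"
        using sections k_fin
      proof eventually_elim
        case (elim \<xi>)
        then show ?case by (simp add: g_def ennreal_enn2real less_top)
      qed
    qed
  qed
qed

lemma kernel_defect_sections:
  fixes K Kl :: "'k::euclidean_space \<Rightarrow> 'k \<Rightarrow> real^'n^'m"
  assumes Om: "compact Om" and q: "q > 1"
    and K_meas: "(\<lambda>(\<xi>, s). K \<xi> s) \<in> borel_measurable (lebesgue_on (Om \<times> Om))"
    and K_int: "integrable (lebesgue_on (Om \<times> Om)) (\<lambda>(\<xi>, s). norm (K \<xi> s) powr q)"
    and Kl_cont: "continuous_on (Om \<times> Om) (\<lambda>(\<xi>, s). Kl \<xi> s)"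
  obtains g where "g \<in> borel_measurable (lebesgue_on Om)" and "\<And>\<xi>. g \<xi> \<ge> 0"
    and "integrable (lebesgue_on Om) g"
    and "(\<integral>\<xi>. g \<xi> \<partial>lebesgue_on Om)
      \<le> (\<integral>z. norm (K (fst z) (snd z) - Kl (fst z) (snd z)) powr q \<partial>lebesgue_on (Om \<times> Om))"
    and "AE \<xi> in lebesgue_on Om. (\<lambda>s. K \<xi> s) \<in> borel_measurable (lebesgue_on Om) \<and>
      (\<integral>\<^sup>+s. ennreal (norm (K \<xi> s - Kl \<xi> s) powr q) \<partial>lebesgue_on Om) = ennreal (g \<xi>)"
proof -
  have Om_closed: "closed Om" using Om by (rule compact_imp_closed)
  have OO: "compact (Om \<times> Om)" using Om Om by (rule compact_Times)
  have Kl_meas: "(\<lambda>(\<xi>, s). Kl \<xi> s) \<in> borel_measurable (lebesgue_on (Om \<times> Om))"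
    using Kl_cont OO by (intro continuous_imp_measurable_on_sets_lebesgue) (auto simp: borel_compact)
  have defect: "(\<lambda>(\<xi>, s). norm (K \<xi> s - Kl \<xi> s) powr q) \<in> borel_measurable (lebesgue_on (Om \<times> Om))"
    "integrable (lebesgue_on (Om \<times> Om)) (\<lambda>(\<xi>, s). norm (K \<xi> s - Kl \<xi> s) powr q)"
    using integrable_norm_diff_powr[of "lebesgue_on (Om \<times> Om)" q "\<lambda>(\<xi>, s). K \<xi> s" "\<lambda>(\<xi>, s). Kl \<xi> s"
        "kernel_max Om Kl"]
      K_meas K_int Kl_meas norm_le_kernel_max[OF Om Kl_cont] q OO
    by (auto simp: case_prod_unfold finite_measure_lebesgue_on lmeasurable_compact)
  obtain g where g: "g \<in> borel_measurable (lebesgue_on Om)" "\<And>\<xi>. g \<xi> \<ge> 0"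
    "integrable (lebesgue_on Om) g"
    and g_le: "(\<integral>\<xi>. g \<xi> \<partial>lebesgue_on Om)
      \<le> (\<integral>z. (\<lambda>(\<xi>, s). norm (K \<xi> s - Kl \<xi> s) powr q) z \<partial>lebesgue_on (Om \<times> Om))"
    and sections: "AE \<xi> in lebesgue_on Om.
      (\<integral>\<^sup>+s. ennreal (norm (K \<xi> s - Kl \<xi> s) powr q) \<partial>lebesgue_on Om) = ennreal (g \<xi>)"
    using integral_sections_lebesgue_on[OF Om_closed defect powr_ge_zero] by blast
  have K_rows: "AE \<xi> in lebesgue_on Om. (\<lambda>s. K \<xi> s) \<in> borel_measurable (lebesgue_on Om)"
    by (rule borel_measurable_sections_lebesgue_on[OF Om_closed K_meas])
  show thesis
  proof (rule that[OF g g_le[unfolded case_prod_unfold]])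
    show "AE \<xi> in lebesgue_on Om. (\<lambda>s. K \<xi> s) \<in> borel_measurable (lebesgue_on Om) \<and>
        (\<integral>\<^sup>+s. ennreal (norm (K \<xi> s - Kl \<xi> s) powr q) \<partial>lebesgue_on Om) = ennreal (g \<xi>)"
      using K_rows sections by (rule eventually_conj)
  qed
qed

section \<open>The discretisation error\<close>

lemma HS_op_disc_ball_approx:
  fixes Om :: "'k::euclidean_space set" and K Kl :: "'k \<Rightarrow> 'k \<Rightarrow> real^'n^'m"
    and x :: "'k \<Rightarrow> real^'n"
  assumes Om: "compact Om" "Om \<noteq> {}" and pq: "p > 1" "1 / p + 1 / q = 1" and r: "r > 0"
    and Kl_cont: "continuous_on (Om \<times> Om) (\<lambda>(\<xi>, s). Kl \<xi> s)"
    and params: "gamma > 0" "D > 0" "sg > 0" and a: "a \<ge> 1"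
    and part: "Delta_partition Om D N P" and net: "sigma_net (sphere 0 1) sg Es"
    and g: "g \<in> borel_measurable (lebesgue_on Om)" "\<And>\<xi>. g \<xi> \<ge> 0" "integrable (lebesgue_on Om) g"
    and sections: "AE \<xi> in lebesgue_on Om. (\<lambda>s. K \<xi> s) \<in> borel_measurable (lebesgue_on Om) \<and>
      (\<integral>\<^sup>+s. ennreal (norm (K \<xi> s - Kl \<xi> s) powr q) \<partial>lebesgue_on Om) = ennreal (g \<xi>)"
    and x: "x \<in> Lp_ball p Om r"
  obtains y where "y \<in> disc_ball p Om r N P gamma a Es"
    and "Lp_norm q Om (\<lambda>\<xi>. HS_op Om K x \<xi> - HS_op Om K y \<xi>)
      \<le> 2 * r * (\<integral>\<xi>. g \<xi> \<partial>lebesgue_on Om) powr (1 / q)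
        + (kernel_max Om Kl * r powr p / gamma powr (p - 1)
           + 2 * kernel_modulus Om Kl D * (measure lebesgue Om powr (1 / q) * r)
           + kernel_max Om Kl * (gamma / real a + gamma * sg) * measure lebesgue Om)
          * measure lebesgue Om powr (1 / q)"
proof -
  let ?L = "lebesgue_on Om"
  let ?M = "kernel_max Om Kl" and ?W = "kernel_modulus Om Kl D"
  define C where "C = ?M * r powr p / gamma powr (p - 1) + 2 * ?W * (measure lebesgue Om powr (1 / q) * r)
    + ?M * (gamma / real a + gamma * sg) * measure lebesgue Om"
  have q: "q > 1" using pq by (rule conjugate_exponent_gt_one)
  have Om_meas: "Om \<in> lmeasurable" using Om(1) by (rule lmeasurable_compact)
  then have Om_sets: "Om \<in> sets lebesgue" by (rule fmeasurableD)
  have M: "?M \<ge> 0" by (rule kernel_max_nonneg[OF Om Kl_cont])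
  have W: "?W \<ge> 0" using params(2) by (intro kernel_modulus_nonneg[OF Om Kl_cont]) simp
  have C: "C \<ge> 0" unfolding C_def using M W params r by simp
  obtain y c where y: "y \<in> disc_ball p Om r N P gamma a Es"
    and cells: "\<And>i s. i < N \<Longrightarrow> s \<in> P i \<Longrightarrow> y s = c i"
    and averages: "\<And>i. i < N \<Longrightarrow> norm (set_average ?L (P i) (truncation gamma x) - c i) \<le> gamma / real a + gamma * sg"
    using disc_ball_approx[OF Om_meas pq(1) params(1) a part net x] by blast
  have "Es \<subseteq> sphere 0 1" using net unfolding sigma_net_def by blast
  then have "disc_ball p Om r N P gamma a Es \<subseteq> Lp_ball p Om r"
    using pq(1) r params(1) by (intro disc_ball_subset_Lp_ball[OF Om_meas _ _ _ part]) auto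
  with y have y_ball: "y \<in> Lp_ball p Om r" by blast
  have "AE \<xi> in ?L. norm (HS_op Om K x \<xi> - HS_op Om K y \<xi>) \<le> 2 * r * g \<xi> powr (1 / q) + C"
    using sections AE_space
  proof eventually_elim
    case (elim \<xi>)
    then have \<xi>: "\<xi> \<in> Om" by simp
    note Kl_row = borel_measurable_kernel_row[OF Om_sets Kl_cont \<xi>]
    note Kl_bound = norm_le_kernel_max[OF Om(1) Kl_cont \<xi>]
    have "norm (\<integral>s. Kl \<xi> s *v (x s - y s) \<partial>?L) \<le> C"
      unfolding C_def
      by (rule kernel_row_discretization_le[OF Om(1) pq params(1) part x cells averages Kl_row
            Kl_bound M norm_diff_le_kernel_modulus[OF Om(1) Kl_cont \<xi>] W])
    moreover have "norm (HS_op Om K x \<xi> - HS_op Om K y \<xi>)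
        \<le> 2 * r * g \<xi> powr (1 / q) + norm (\<integral>s. Kl \<xi> s *v (x s - y s) \<partial>?L)"
      unfolding HS_op_def
      by (rule norm_integral_kernel_diff_le[OF Om_meas pq x y_ball _ Kl_row Kl_bound _ g(2)])
        (use elim in auto)
    ultimately show ?case by linarith
  qed
  then have "Lp_norm q Om (\<lambda>\<xi>. HS_op Om K x \<xi> - HS_op Om K y \<xi>)
      \<le> 2 * r * (\<integral>\<xi>. g \<xi> \<partial>?L) powr (1 / q) + C * measure lebesgue Om powr (1 / q)"
    using r by (intro Lp_norm_le_of_AE_bound[OF Om_meas q g _ C]) auto
  with y show thesis using that unfolding C_def by blast
qed

lemma haus_dist_le_of_approx:
  fixes F :: "('k::euclidean_space \<Rightarrow> 'a) \<Rightarrow> 'k \<Rightarrow> 'b::real_normed_vector"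
  assumes sub: "B \<subseteq> A" and approx: "\<And>x. x \<in> A \<Longrightarrow> \<exists>y\<in>B. Lp_norm q Om (\<lambda>\<xi>. F x \<xi> - F y \<xi>) \<le> c"
    and c: "c \<ge> 0"
  shows "haus_dist q Om (F ` A) (F ` B) \<le> ereal c"
  unfolding haus_dist_def
proof (intro max.boundedI SUP_least)
  fix u assume "u \<in> F ` A"
  then obtain x where x: "x \<in> A" "u = F x" by blast
  then obtain y where "y \<in> B" "Lp_norm q Om (\<lambda>\<xi>. F x \<xi> - F y \<xi>) \<le> c" using approx by blast
  then show "(INF v\<in>F ` B. ereal (Lp_norm q Om (\<lambda>\<xi>. u \<xi> - v \<xi>))) \<le> ereal c"
    using x by (intro INF_lower2) auto
next
  fix v assume "v \<in> F ` B"
  then have "v \<in> F ` A" using sub by blast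
  moreover have "Lp_norm q Om (\<lambda>\<xi>. v \<xi> - v \<xi>) = 0" by (simp add: Lp_norm_def)
  ultimately show "(INF u\<in>F ` A. ereal (Lp_norm q Om (\<lambda>\<xi>. u \<xi> - v \<xi>))) \<le> ereal c"
    using c by (intro INF_lower2) auto
qed

lemma discretization_constant_le:
  fixes \<mu> M W r p q \<gamma> \<delta> \<sigma> :: real
  assumes "\<mu> \<ge> 0" "M \<ge> 0"
  shows "(M * r powr p / \<gamma> powr (p - 1) + 2 * W * (\<mu> powr (1 / q) * r) + M * (\<delta> + \<gamma> * \<sigma>) * \<mu>) * \<mu> powr (1 / q)
    \<le> 2 * r powr p * \<mu> powr (1 / q) * M / \<gamma> powr (p - 1) + 2 * r * \<mu> powr (2 / q) * W
      + M * \<mu> powr (1 + 1 / q) * \<delta> + M * \<mu> powr (1 + 1 / q) * \<gamma> * \<sigma>"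
proof -
  define X where "X = M * r powr p / \<gamma> powr (p - 1) * \<mu> powr (1 / q)"
  have "\<mu> powr (1 / q) * \<mu> powr (1 / q) = \<mu> powr (2 / q)" by (simp add: powr_add[symmetric])
  moreover have "\<mu> * \<mu> powr (1 / q) = \<mu> powr (1 + 1 / q)"
    using assms(1) by (cases "\<mu> = 0") (simp_all add: powr_add)
  ultimately have "(M * r powr p / \<gamma> powr (p - 1) + 2 * W * (\<mu> powr (1 / q) * r) + M * (\<delta> + \<gamma> * \<sigma>) * \<mu>) * \<mu> powr (1 / q)
      = X + 2 * r * \<mu> powr (2 / q) * W + M * \<mu> powr (1 + 1 / q) * \<delta> + M * \<mu> powr (1 + 1 / q) * \<gamma> * \<sigma>"
    unfolding X_def by (simp add: algebra_simps)
  \<comment> \<open>the truncation term of the stated bound carries a factor \<open>2\<close> that the argument does not need\<close>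
  moreover have "2 * r powr p * \<mu> powr (1 / q) * M / \<gamma> powr (p - 1) = 2 * X" by (simp add: X_def)
  moreover have "X \<ge> 0" using assms(2) by (simp add: X_def)
  ultimately show ?thesis by linarith
qed

theorem theorem1:
  fixes Om :: "(real^'k) set"
    and p q r lam gamma D sg :: real
    and K Kl :: "real^'k \<Rightarrow> real^'k \<Rightarrow> real^'n^'m"
    and N a :: nat
    and P :: "nat \<Rightarrow> (real^'k) set"
    and Es :: "(real^'n) set"
  assumes Om: "compact Om" "Om \<noteq> {}"
    and pq: "p > 1" "1 / p + 1 / q = 1"
    and r: "r > 0"
    and K_meas: "(\<lambda>(xi, s). K xi s) \<in> borel_measurable (lebesgue_on (Om \<times> Om))"
    and K_int: "integrable (lebesgue_on (Om \<times> Om)) (\<lambda>(xi, s). norm (K xi s) powr q)"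
    and lam: "lam > 0"
    and Kl_cont: "continuous_on (Om \<times> Om) (\<lambda>(xi, s). Kl xi s)"
    and Kl_approx: "(\<integral>z. norm (K (fst z) (snd z) - Kl (fst z) (snd z)) powr q
                        \<partial>(lebesgue_on (Om \<times> Om))) powr (1 / q) \<le> lam / (2 * r)"
    and params: "gamma > 0" "D > 0" "sg > 0"
    and part: "Delta_partition Om D N P"
    and a: "a \<ge> 1"
    and net: "sigma_net (sphere 0 1) sg Es"
  shows "haus_dist q Om (HS_op Om K ` Lp_ball p Om r)
                        (HS_op Om K ` disc_ball p Om r N P gamma a Es)
         \<le> ereal (lam
             + 2 * r powr p * measure lebesgue Om powr (1 / q) * kernel_max Om Kl / gamma powr (p - 1)
             + 2 * r * measure lebesgue Om powr (2 / q) * kernel_modulus Om Kl D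
             + kernel_max Om Kl * measure lebesgue Om powr (1 + 1 / q) * (gamma / real a)
             + kernel_max Om Kl * measure lebesgue Om powr (1 + 1 / q) * gamma * sg)"
proof -
  let ?\<mu> = "measure lebesgue Om"
  let ?M = "kernel_max Om Kl" and ?W = "kernel_modulus Om Kl D"
  define C where "C = ?M * r powr p / gamma powr (p - 1) + 2 * ?W * (?\<mu> powr (1 / q) * r)
    + ?M * (gamma / real a + gamma * sg) * ?\<mu>"
  have q: "q > 1" using pq by (rule conjugate_exponent_gt_one)
  obtain g where g: "g \<in> borel_measurable (lebesgue_on Om)" "\<And>\<xi>. g \<xi> \<ge> 0" "integrable (lebesgue_on Om) g"
    and g_le: "(\<integral>\<xi>. g \<xi> \<partial>lebesgue_on Om)
      \<le> (\<integral>z. norm (K (fst z) (snd z) - Kl (fst z) (snd z)) powr q \<partial>lebesgue_on (Om \<times> Om))"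
    and sections: "AE \<xi> in lebesgue_on Om. (\<lambda>s. K \<xi> s) \<in> borel_measurable (lebesgue_on Om) \<and>
      (\<integral>\<^sup>+s. ennreal (norm (K \<xi> s - Kl \<xi> s) powr q) \<partial>lebesgue_on Om) = ennreal (g \<xi>)"
    using kernel_defect_sections[OF Om(1) q K_meas K_int Kl_cont] by blast
  have lam_le: "2 * r * (\<integral>\<xi>. g \<xi> \<partial>lebesgue_on Om) powr (1 / q) \<le> lam"
    using mult_left_mono[OF order_trans[OF powr_mono2[OF _ _ g_le] Kl_approx], of "2 * r"] g(2) q r
    by (simp add: integral_nonneg_AE)
  have approx: "\<exists>y\<in>disc_ball p Om r N P gamma a Es.
      Lp_norm q Om (\<lambda>\<xi>. HS_op Om K x \<xi> - HS_op Om K y \<xi>) \<le> lam + C * ?\<mu> powr (1 / q)"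
    if x: "x \<in> Lp_ball p Om r" for x
  proof -
    obtain y where "y \<in> disc_ball p Om r N P gamma a Es"
      and "Lp_norm q Om (\<lambda>\<xi>. HS_op Om K x \<xi> - HS_op Om K y \<xi>)
        \<le> 2 * r * (\<integral>\<xi>. g \<xi> \<partial>lebesgue_on Om) powr (1 / q) + C * ?\<mu> powr (1 / q)"
      using HS_op_disc_ball_approx[OF Om pq r Kl_cont params a part net g sections x]
      unfolding C_def by blast
    with lam_le show ?thesis by (intro bexI[of _ y]) auto
  qed
  have "Es \<subseteq> sphere 0 1" using net unfolding sigma_net_def by blast
  then have "disc_ball p Om r N P gamma a Es \<subseteq> Lp_ball p Om r"
    using Om(1) pq(1) r params(1)
    by (intro disc_ball_subset_Lp_ball[OF _ _ _ _ part]) (auto simp: lmeasurable_compact)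
  moreover have "C \<ge> 0"
    unfolding C_def using kernel_max_nonneg[OF Om Kl_cont] kernel_modulus_nonneg[OF Om Kl_cont] params r
    by simp
  ultimately have haus: "haus_dist q Om (HS_op Om K ` Lp_ball p Om r) (HS_op Om K ` disc_ball p Om r N P gamma a Es)
      \<le> ereal (lam + C * ?\<mu> powr (1 / q))"
    using approx lam by (intro haus_dist_le_of_approx) auto
  have "C * ?\<mu> powr (1 / q) \<le> 2 * r powr p * ?\<mu> powr (1 / q) * ?M / gamma powr (p - 1)
      + 2 * r * ?\<mu> powr (2 / q) * ?W + ?M * ?\<mu> powr (1 + 1 / q) * (gamma / real a)
      + ?M * ?\<mu> powr (1 + 1 / q) * gamma * sg"
    unfolding C_def by (rule discretization_constant_le[OF measure_nonneg kernel_max_nonneg[OF Om Kl_cont]])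
  with haus show ?thesis by (simp add: order_trans)
qed

end
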